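(* Let $\phi(w)=aw+b$ with $a>0$ and $b\in\mathbb{C}$, $\mathrm{Re}(b)\geq 0$, and let $C_\phi f=f\circ\phi$ on $H^2(\mathbb{C}_{+})$. (S.1) If either $a\neq 1$ and $\mathrm{Re}(b)=0$ (hyperbolic automorphism), or $a\in(1,\infty)$ and $\mathrm{Re}(b)>0$ (hyperbolic non-automorphism of type II), then $C_{\phi}$ has the positive shadowing property on $H^2(\mathbb{C}_{+})$. (S.2) If either $a=1$ (parabolic type), or $a\in(0,1)$ and $\mathrm{Re}(b)>0$ (hyperbolic non-automorphism of type I), then $C_{\phi}$ does not have the positive shadowing property on $H^2(\mathbb{C}_{+})$.
   Context: $\mathbb{C}_{+}=\{w\in\mathbb{C}:\mathrm{Re}(w)>0\}$. $H^2(\mathbb{C}_{+})$ is the Hardy space of holomorphic $f$ on $\mathbb{C}_{+}$ with finite norm $\|f\|_2^2=\sup_{0<x<\infty}\frac{1}{\pi}\int_{-\infty}^{\infty}|f(x+iy)|^2\,dy$; $C_\phi$ is bounded on it. For an operator $T$ on a Banach space $X$ and $\delta>0$, a sequence $(x_n)_{n\in\mathbb{N}}\subset X$ is a $\delta$-pseudotrajectory if $\|Tx_n-x_{n+1}\|\le\delta$ for all $n$. $T$ has the positive shadowing property if for every $\epsilon>0$ there is $\delta>0$ such that for every $\delta$-pseudotrajectory $(x_n)_{n\in\mathbb{N}}$ there exists $x\in X$ with $\|T^nx-x_n\|\le\epsilon$ for all $n\in\mathbb{N}$. *)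

theory Defs
  imports "HOL-Complex_Analysis.Complex_Analysis"
begin

definition rhp :: "complex set" where
  "rhp = {w. Re w > 0}"

definition hardy_sup :: "(complex \<Rightarrow> complex) \<Rightarrow> ennreal" where
  "hardy_sup f = (SUP x\<in>{0<..}. \<integral>\<^sup>+ y. ennreal ((cmod (f (Complex x y)))\<^sup>2) \<partial>lborel)"

text \<open>The Hardy space H^2 of the right half-plane (functions are only relevant on rhp).\<close>
definition H2 :: "(complex \<Rightarrow> complex) set" where
  "H2 = {f. f holomorphic_on rhp \<and> hardy_sup f < \<infinity>}"

definition H2_norm :: "(complex \<Rightarrow> complex) \<Rightarrow> real" where
  "H2_norm f = sqrt (enn2real (hardy_sup f) / pi)"

definition comp_op :: "(complex \<Rightarrow> complex) \<Rightarrow> (complex \<Rightarrow> complex) \<Rightarrow> (complex \<Rightarrow> complex)" where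
  "comp_op \<phi> f = f \<circ> \<phi>"

definition positive_shadowing ::
  "'a set \<Rightarrow> ('a \<Rightarrow> 'a \<Rightarrow> real) \<Rightarrow> ('a \<Rightarrow> 'a) \<Rightarrow> bool" where
  "positive_shadowing X d T \<longleftrightarrow>
     (\<forall>\<epsilon>>0. \<exists>\<delta>>0. \<forall>xs :: nat \<Rightarrow> 'a.
        ((\<forall>n. xs n \<in> X) \<and> (\<forall>n. d (T (xs n)) (xs (Suc n)) \<le> \<delta>)) \<longrightarrow>
        (\<exists>x\<in>X. \<forall>n. d ((T ^^ n) x) (xs n) \<le> \<epsilon>))"

definition H2_dist :: "(complex \<Rightarrow> complex) \<Rightarrow> (complex \<Rightarrow> complex) \<Rightarrow> real" where
  "H2_dist f g = H2_norm (\<lambda>w. f w - g w)"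

end

theory Submission
  imports Defs "HOL-Probability.Sinc_Integral"
begin

(* Substituting y = a t + Im b on each vertical line gives
   hardy_line (f o phi) x = hardy_line f (a x + Re b) / a, so that C_phi has norm at most 1 / sqrt a,
   with equality of norms when Re b = 0, where C_phi is invertible with inverse C_psi,
   psi = phi^-1.

   If a > 1, C_phi is a contraction, and a contraction shadows every pseudotrajectory by the
   orbit of its first point.  If a < 1 and Re b = 0, C_psi is a contraction and the
   pseudotrajectory x_n is shadowed by x_0 + sum_k C_psi^(k+1) (x_(k+1) - C_phi x_k).  That this
   series defines an element of H^2 rests on the point evaluation estimate
   |f w| <= 4 ||f|| / sqrt r for Re w > r, obtained from Cauchy's formula on rectangles averaged
   over their height.

   For the negative cases let k w = 1 / (w + 1), a unit vector of H^2.  If phi is a translation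
   by an imaginary b, C_phi is an isometry and n delta C_phi^n k is a delta-pseudotrajectory that
   drifts away from every orbit.  Otherwise the orbit sums delta sum_(j<n) C_phi^j k form a
   delta-pseudotrajectory whose real part is unbounded on a vertical segment whose phi-orbit stays
   in a half-plane Re w >= r: for a translation with Re b > 0 it grows like the harmonic series,
   and for a < 1 like n near the attracting fixed point b / (1 - a).  On such a segment every
   C_phi^n x is bounded by the point evaluation estimate, so no orbit follows the sums. *)

section \<open>The Hardy space as a normed space\<close>

definition hardy_line :: "(complex \<Rightarrow> complex) \<Rightarrow> real \<Rightarrow> ennreal" where
  "hardy_line f x = (\<integral>\<^sup>+ y. ennreal ((cmod (f (Complex x y)))\<^sup>2) \<partial>lborel)"

lemma hardy_sup_eq_SUP_hardy_line: "hardy_sup f = (SUP x\<in>{0<..}. hardy_line f x)"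
  unfolding hardy_sup_def hardy_line_def ..

lemma open_rhp: "open rhp"
  unfolding rhp_def by (simp add: open_halfspace_Re_gt)

lemma convex_rhp: "convex rhp"
  unfolding rhp_def by (simp add: convex_halfspace_Re_gt)

lemma Complex_in_rhp_iff [simp]: "Complex x y \<in> rhp \<longleftrightarrow> x > 0"
  unfolding rhp_def by simp

lemma continuous_on_vertical_line:
  assumes "f holomorphic_on rhp" and "x > 0"
  shows "continuous_on UNIV (\<lambda>y. f (Complex x y))"
proof -
  have "continuous_on UNIV (\<lambda>y. Complex x y)"
    unfolding Complex_eq by (intro continuous_intros)
  moreover have "range (\<lambda>y. Complex x y) \<subseteq> rhp"
    using assms(2) by auto
  ultimately show ?thesis
    using continuous_on_compose2[OF holomorphic_on_imp_continuous_on[OF assms(1)]] by blast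
qed

lemma hardy_line_integrand_measurable:
  assumes "f holomorphic_on rhp" and "x > 0"
  shows "(\<lambda>y. ennreal ((cmod (f (Complex x y)))\<^sup>2)) \<in> borel_measurable borel"
proof -
  have [measurable]: "(\<lambda>y. f (Complex x y)) \<in> borel_measurable borel"
    by (rule borel_measurable_continuous_onI[OF continuous_on_vertical_line[OF assms]])
  show ?thesis by measurable
qed

lemma H2_normI:
  assumes "f holomorphic_on rhp" and "C \<ge> 0"
    and bound: "\<And>x. x > 0 \<Longrightarrow> hardy_line f x \<le> ennreal (pi * C\<^sup>2)"
  shows "f \<in> H2" and "H2_norm f \<le> C"
proof -
  have le: "hardy_sup f \<le> ennreal (pi * C\<^sup>2)"
    unfolding hardy_sup_eq_SUP_hardy_line using bound by (auto intro: SUP_least)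
  then show "f \<in> H2"
    using assms(1) by (auto simp: H2_def intro: le_less_trans)
  have "enn2real (hardy_sup f) / pi \<le> C\<^sup>2"
    using le by (simp add: divide_le_eq enn2real_leI mult.commute)
  then show "H2_norm f \<le> C"
    unfolding H2_norm_def using \<open>C \<ge> 0\<close> by (simp add: real_le_lsqrt)
qed

lemma H2_norm_nonneg [simp]: "0 \<le> H2_norm f"
  unfolding H2_norm_def by simp

lemma hardy_sup_H2_norm:
  assumes "f \<in> H2"
  shows "hardy_sup f = ennreal (pi * (H2_norm f)\<^sup>2)"
  using assms by (simp add: H2_def H2_norm_def ennreal_enn2real_if less_top)

lemma hardy_line_le_H2_norm:
  assumes "f \<in> H2" and "x > 0"
  shows "hardy_line f x \<le> ennreal (pi * (H2_norm f)\<^sup>2)"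
  using assms by (auto simp flip: hardy_sup_H2_norm simp: hardy_sup_eq_SUP_hardy_line intro: SUP_upper)

lemma H2_norm_cong:
  assumes "\<And>w. w \<in> rhp \<Longrightarrow> f w = g w"
  shows "H2_norm f = H2_norm g"
proof -
  have "hardy_line f x = hardy_line g x" if "x > 0" for x
    unfolding hardy_line_def using assms that by simp
  then show ?thesis
    unfolding H2_norm_def hardy_sup_eq_SUP_hardy_line by (metis greaterThan_iff SUP_cong)
qed

lemma H2_dist_commute: "H2_dist f g = H2_dist g f"
  unfolding H2_dist_def H2_norm_def hardy_sup_def by (simp add: norm_minus_commute)

lemma le_add_two_sqrt_mult:
  fixes z A B C :: real
  assumes "A \<ge> 0" and "B \<ge> 0" and le: "\<And>t. t > 0 \<Longrightarrow> z \<le> C + A * t + B / t"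
  shows "z \<le> C + 2 * sqrt (A * B)"
proof (cases "A > 0 \<and> B > 0")
  case True
  define t where "t = sqrt (B / A)"
  have "t > 0" using True by (simp add: t_def)
  moreover have "A * t = sqrt (A * B)" and "B / t = sqrt (A * B)"
    using True by (simp_all add: t_def real_sqrt_divide real_sqrt_mult field_simps)
  ultimately show ?thesis using le[of t] by simp
next
  case False
  then have AB: "A * B = 0" using assms(1,2) by auto
  have "z \<le> C + e" if "e > 0" for e
  proof (cases "A = 0")
    case True
    have "B / ((B + 1) / e) \<le> e"
      using \<open>e > 0\<close> \<open>B \<ge> 0\<close> by (simp add: field_simps)
    then show ?thesis using le[of "(B + 1) / e"] True \<open>e > 0\<close> \<open>B \<ge> 0\<close> by simp
  next
    case False
    then have "B = 0" using AB by simp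
    have "A * (e / (A + 1)) \<le> e"
      using \<open>e > 0\<close> \<open>A \<ge> 0\<close> by (simp add: field_simps)
    then show ?thesis using le[of "e / (A + 1)"] \<open>B = 0\<close> \<open>e > 0\<close> \<open>A \<ge> 0\<close> by simp
  qed
  then have "z \<le> C"
    by (metis add.commute field_le_epsilon le_diff_eq)
  then show ?thesis by (simp add: AB)
qed

lemma norm_add_square_le:
  fixes u v :: "'a::real_normed_vector" and t :: real
  assumes "t > 0"
  shows "(norm (u + v))\<^sup>2 \<le> (1 + t) * (norm u)\<^sup>2 + (1 + 1 / t) * (norm v)\<^sup>2"
proof -
  have "0 \<le> (t * norm u - norm v)\<^sup>2 / t"
    using assms by simp
  then have "(norm u + norm v)\<^sup>2 \<le> (1 + t) * (norm u)\<^sup>2 + (1 + 1 / t) * (norm v)\<^sup>2"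
    using assms by (simp add: power2_eq_square field_simps)
  moreover have "(norm (u + v))\<^sup>2 \<le> (norm u + norm v)\<^sup>2"
    by (simp add: norm_triangle_ineq power_mono)
  ultimately show ?thesis by linarith
qed

lemma hardy_line_add_le:
  assumes f: "f holomorphic_on rhp" and g: "g holomorphic_on rhp" and "x > 0" "t > 0"
  shows "hardy_line (\<lambda>w. f w + g w) x
           \<le> ennreal (1 + t) * hardy_line f x + ennreal (1 + 1 / t) * hardy_line g x"
proof -
  note meas = hardy_line_integrand_measurable[OF f \<open>x > 0\<close>]
    hardy_line_integrand_measurable[OF g \<open>x > 0\<close>]
  have "hardy_line (\<lambda>w. f w + g w) x \<le> (\<integral>\<^sup>+ y. ennreal (1 + t) * ennreal ((cmod (f (Complex x y)))\<^sup>2)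
           + ennreal (1 + 1 / t) * ennreal ((cmod (g (Complex x y)))\<^sup>2) \<partial>lborel)"
    unfolding hardy_line_def using norm_add_square_le[OF \<open>t > 0\<close>] \<open>t > 0\<close>
    by (intro nn_integral_mono)
      (simp add: ennreal_mult[symmetric] ennreal_plus[symmetric] ennreal_leI del: ennreal_plus)
  also have "\<dots> = ennreal (1 + t) * hardy_line f x + ennreal (1 + 1 / t) * hardy_line g x"
    unfolding hardy_line_def using meas by (subst nn_integral_add) (auto simp: nn_integral_cmult)
  finally show ?thesis .
qed

lemma H2_add:
  assumes f: "f \<in> H2" and g: "g \<in> H2"
  shows "(\<lambda>w. f w + g w) \<in> H2" and "H2_norm (\<lambda>w. f w + g w) \<le> H2_norm f + H2_norm g"
proof -
  define A where "A = H2_norm f"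
  define B where "B = H2_norm g"
  have hol: "f holomorphic_on rhp" "g holomorphic_on rhp"
    using f g by (auto simp: H2_def)
  have "hardy_line (\<lambda>w. f w + g w) x \<le> ennreal (pi * (A + B)\<^sup>2)" if "x > 0" for x
  proof -
    have le: "hardy_line (\<lambda>w. f w + g w) x \<le> ennreal (pi * (A\<^sup>2 + B\<^sup>2) + pi * A\<^sup>2 * t + pi * B\<^sup>2 / t)"
      if "t > 0" for t
    proof -
      have "hardy_line (\<lambda>w. f w + g w) x
              \<le> ennreal (1 + t) * hardy_line f x + ennreal (1 + 1 / t) * hardy_line g x"
        by (rule hardy_line_add_le[OF hol \<open>x > 0\<close> \<open>t > 0\<close>])
      also have "\<dots> \<le> ennreal (1 + t) * ennreal (pi * A\<^sup>2) + ennreal (1 + 1 / t) * ennreal (pi * B\<^sup>2)"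
        unfolding A_def B_def
        by (intro add_mono mult_left_mono hardy_line_le_H2_norm f g \<open>x > 0\<close>) auto
      also have "\<dots> = ennreal ((1 + t) * (pi * A\<^sup>2) + (1 + 1 / t) * (pi * B\<^sup>2))"
        using \<open>t > 0\<close> by (simp add: ennreal_mult[symmetric] ennreal_plus[symmetric] del: ennreal_plus)
      also have "(1 + t) * (pi * A\<^sup>2) + (1 + 1 / t) * (pi * B\<^sup>2)
                   = pi * (A\<^sup>2 + B\<^sup>2) + pi * A\<^sup>2 * t + pi * B\<^sup>2 / t"
        by (simp add: algebra_simps)
      finally show ?thesis .
    qed
    obtain z where z: "hardy_line (\<lambda>w. f w + g w) x = ennreal z" "z \<ge> 0"
      using le[of 1] by (cases "hardy_line (\<lambda>w. f w + g w) x") (auto simp: top_unique simp del: ennreal_plus)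
    have "z \<le> pi * (A\<^sup>2 + B\<^sup>2) + 2 * sqrt (pi * A\<^sup>2 * (pi * B\<^sup>2))"
    proof (rule le_add_two_sqrt_mult)
      fix t :: real assume "t > 0"
      then show "z \<le> pi * (A\<^sup>2 + B\<^sup>2) + pi * A\<^sup>2 * t + pi * B\<^sup>2 / t"
        using le[OF \<open>t > 0\<close>] z by (simp add: ennreal_le_iff del: ennreal_plus)
    qed simp_all
    also have "\<dots> = pi * (A + B)\<^sup>2"
      by (simp add: A_def B_def real_sqrt_mult power2_eq_square algebra_simps)
    finally show ?thesis using z by (simp add: ennreal_leI)
  qed
  then show "(\<lambda>w. f w + g w) \<in> H2" and "H2_norm (\<lambda>w. f w + g w) \<le> H2_norm f + H2_norm g"
    using H2_normI[of "\<lambda>w. f w + g w" "A + B"] hol unfolding A_def B_def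
    by (auto intro: holomorphic_intros)
qed

lemma H2_zero: "(\<lambda>w. 0) \<in> H2" and H2_norm_zero: "H2_norm (\<lambda>w. 0) = 0"
proof -
  have "hardy_line (\<lambda>w. 0) x \<le> ennreal (pi * 0\<^sup>2)" for x
    by (simp add: hardy_line_def)
  then show "(\<lambda>w. 0) \<in> H2" and "H2_norm (\<lambda>w. 0) = 0"
    using H2_normI[of "\<lambda>w. 0" 0] by (auto intro: antisym)
qed

lemma H2_scaleC_le:
  assumes "f \<in> H2"
  shows "(\<lambda>w. c * f w) \<in> H2" and "H2_norm (\<lambda>w. c * f w) \<le> cmod c * H2_norm f"
proof -
  have hol: "f holomorphic_on rhp" using assms by (simp add: H2_def)
  have bound: "hardy_line (\<lambda>w. c * f w) x \<le> ennreal (pi * (cmod c * H2_norm f)\<^sup>2)"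
    if "x > 0" for x
  proof -
    have "hardy_line (\<lambda>w. c * f w) x = ennreal ((cmod c)\<^sup>2) * hardy_line f x"
      unfolding hardy_line_def using hardy_line_integrand_measurable[OF hol \<open>x > 0\<close>]
      by (simp add: norm_mult power_mult_distrib ennreal_mult nn_integral_cmult)
    also have "\<dots> \<le> ennreal ((cmod c)\<^sup>2) * ennreal (pi * (H2_norm f)\<^sup>2)"
      by (intro mult_left_mono hardy_line_le_H2_norm assms \<open>x > 0\<close>) simp
    finally show ?thesis by (simp add: ennreal_mult[symmetric] power_mult_distrib mult_ac)
  qed
  have "(\<lambda>w. c * f w) holomorphic_on rhp"
    using hol by (intro holomorphic_intros)
  from H2_normI[OF this _ bound]
  show "(\<lambda>w. c * f w) \<in> H2" and "H2_norm (\<lambda>w. c * f w) \<le> cmod c * H2_norm f"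
    by simp_all
qed

lemma H2_scaleC:
  assumes "f \<in> H2"
  shows "(\<lambda>w. c * f w) \<in> H2" and "H2_norm (\<lambda>w. c * f w) = cmod c * H2_norm f"
proof -
  show cf: "(\<lambda>w. c * f w) \<in> H2" by (rule H2_scaleC_le(1)[OF assms])
  show "H2_norm (\<lambda>w. c * f w) = cmod c * H2_norm f"
  proof (cases "c = 0")
    case False
    have "H2_norm f = H2_norm (\<lambda>w. inverse c * (c * f w))"
      using False by (simp add: field_simps)
    also have "\<dots> \<le> cmod (inverse c) * H2_norm (\<lambda>w. c * f w)"
      by (rule H2_scaleC_le(2)[OF cf])
    finally have "cmod c * H2_norm f \<le> cmod c * (cmod (inverse c) * H2_norm (\<lambda>w. c * f w))"
      by (simp add: mult_left_mono)
    also have "\<dots> = H2_norm (\<lambda>w. c * f w)"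
      using False by (simp add: norm_inverse)
    finally have "cmod c * H2_norm f \<le> H2_norm (\<lambda>w. c * f w)" .
    with H2_scaleC_le(2)[OF assms, of c] show ?thesis by simp
  qed (simp add: H2_norm_zero)
qed

lemma H2_diff:
  assumes "f \<in> H2" and "g \<in> H2"
  shows "(\<lambda>w. f w - g w) \<in> H2" and "H2_norm (\<lambda>w. f w - g w) \<le> H2_norm f + H2_norm g"
proof -
  have diff: "(\<lambda>w. f w - g w) = (\<lambda>w. f w + (-1) * g w)" by simp
  have minus: "(\<lambda>w. (-1) * g w) \<in> H2" "H2_norm (\<lambda>w. (-1) * g w) = H2_norm g"
    using H2_scaleC[OF assms(2), of "-1"] by simp_all
  show "(\<lambda>w. f w - g w) \<in> H2"
    unfolding diff by (rule H2_add(1)[OF assms(1) minus(1)])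
  show "H2_norm (\<lambda>w. f w - g w) \<le> H2_norm f + H2_norm g"
    unfolding diff using H2_add(2)[OF assms(1) minus(1)] minus(2) by linarith
qed

lemma H2_sum:
  assumes "finite A" and "\<And>j. j \<in> A \<Longrightarrow> g j \<in> H2"
  shows "(\<lambda>w. \<Sum>j\<in>A. g j w) \<in> H2" and "H2_norm (\<lambda>w. \<Sum>j\<in>A. g j w) \<le> (\<Sum>j\<in>A. H2_norm (g j))"
proof -
  from assms have "(\<lambda>w. \<Sum>j\<in>A. g j w) \<in> H2 \<and> H2_norm (\<lambda>w. \<Sum>j\<in>A. g j w) \<le> (\<Sum>j\<in>A. H2_norm (g j))"
  proof (induction A rule: finite_induct)
    case empty
    then show ?case by (simp add: H2_zero H2_norm_zero)
  next
    case (insert j A)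
    then show ?case
      using H2_add[of "g j" "\<lambda>w. \<Sum>j\<in>A. g j w"] by simp
  qed
  then show "(\<lambda>w. \<Sum>j\<in>A. g j w) \<in> H2" and "H2_norm (\<lambda>w. \<Sum>j\<in>A. g j w) \<le> (\<Sum>j\<in>A. H2_norm (g j))"
    by simp_all
qed

lemma H2_norm_ge_segment:
  assumes "f \<in> H2" and "x > 0" and "y1 \<le> y2" and "K \<ge> 0"
    and bound: "\<And>y. y1 \<le> y \<Longrightarrow> y \<le> y2 \<Longrightarrow> K \<le> cmod (f (Complex x y))"
  shows "(y2 - y1) * K\<^sup>2 \<le> pi * (H2_norm f)\<^sup>2"
proof -
  have "(\<integral>\<^sup>+ y. ennreal (K\<^sup>2) * indicator {y1..y2} y \<partial>lborel)
          = ennreal (K\<^sup>2) * emeasure lborel {y1..y2}"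
    by (rule nn_integral_cmult_indicator) simp
  then have "ennreal ((y2 - y1) * K\<^sup>2) = (\<integral>\<^sup>+ y. ennreal (K\<^sup>2) * indicator {y1..y2} y \<partial>lborel)"
    using \<open>y1 \<le> y2\<close> by (simp add: ennreal_mult mult.commute)
  also have "\<dots> \<le> hardy_line f x"
    unfolding hardy_line_def
  proof (intro nn_integral_mono)
    fix y
    show "ennreal (K\<^sup>2) * indicator {y1..y2} y \<le> ennreal ((cmod (f (Complex x y)))\<^sup>2)"
      using bound[of y] \<open>K \<ge> 0\<close> by (auto simp: indicator_def intro!: ennreal_leI power_mono)
  qed
  also have "\<dots> \<le> ennreal (pi * (H2_norm f)\<^sup>2)"
    by (rule hardy_line_le_H2_norm[OF assms(1,2)])
  finally show ?thesis by (simp add: ennreal_le_iff)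
qed

section \<open>Composition with affine maps\<close>

definition affine_map :: "real \<Rightarrow> complex \<Rightarrow> complex \<Rightarrow> complex" where
  "affine_map a b w = complex_of_real a * w + b"

lemma affine_map_Complex: "affine_map a b (Complex x y) = Complex (a * x + Re b) (a * y + Im b)"
  by (simp add: affine_map_def complex_eq_iff)

lemma affine_map_in_rhp:
  assumes "a > 0" and "Re b \<ge> 0" and "w \<in> rhp"
  shows "affine_map a b w \<in> rhp"
  using assms unfolding rhp_def affine_map_def by (simp add: add_pos_nonneg)

lemma affine_map_inverse:
  assumes "a \<noteq> 0"
  shows "affine_map a b (affine_map (1 / a) (- b / complex_of_real a) w) = w"
    and "affine_map (1 / a) (- b / complex_of_real a) (affine_map a b w) = w"
  using assms by (simp_all add: affine_map_def field_simps)

lemma funpow_comp_op_apply: "(comp_op \<phi> ^^ n) f w = f ((\<phi> ^^ n) w)"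
proof (induction n arbitrary: w)
  case (Suc n)
  have "(comp_op \<phi> ^^ Suc n) f w = (comp_op \<phi> ^^ n) f (\<phi> w)"
    by (simp add: comp_op_def)
  also have "\<dots> = f ((\<phi> ^^ Suc n) w)"
    by (simp add: Suc funpow_swap1)
  finally show ?case .
qed simp

lemma funpow_affine_map_one: "(affine_map 1 b ^^ n) w = w + of_nat n * b"
  by (induction n) (simp_all add: affine_map_def algebra_simps)

lemma hardy_line_comp_affine_map:
  assumes "f holomorphic_on rhp" and "a > 0" and "a * x + Re b > 0"
  shows "hardy_line (comp_op (affine_map a b) f) x = ennreal (1 / a) * hardy_line f (a * x + Re b)"
proof -
  let ?F = "\<lambda>y. ennreal ((cmod (f (Complex (a * x + Re b) y)))\<^sup>2)"
  have "hardy_line f (a * x + Re b) = ennreal a * (\<integral>\<^sup>+ y. ?F (Im b + a * y) \<partial>lborel)"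
    unfolding hardy_line_def
    using nn_integral_real_affine[OF hardy_line_integrand_measurable[OF assms(1,3)], of a "Im b"]
      \<open>a > 0\<close> by simp
  moreover have "hardy_line (comp_op (affine_map a b) f) x = (\<integral>\<^sup>+ y. ?F (Im b + a * y) \<partial>lborel)"
    unfolding hardy_line_def by (simp add: comp_op_def affine_map_Complex add.commute)
  ultimately show ?thesis
    using \<open>a > 0\<close> by (simp add: ennreal_mult'[symmetric] mult.assoc[symmetric] flip: ennreal_mult)
qed

lemma H2_comp_affine_map:
  assumes "a > 0" and "Re b \<ge> 0" and "f \<in> H2"
  shows "comp_op (affine_map a b) f \<in> H2"
    and "H2_norm (comp_op (affine_map a b) f) \<le> H2_norm f / sqrt a"
proof -
  have hol: "f holomorphic_on rhp" using assms(3) by (simp add: H2_def)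
  have "affine_map a b holomorphic_on rhp"
    unfolding affine_map_def[abs_def] by (intro holomorphic_intros)
  then have hol': "comp_op (affine_map a b) f holomorphic_on rhp"
    unfolding comp_op_def using affine_map_in_rhp[OF assms(1,2)]
    by (intro holomorphic_on_compose_gen[OF _ hol]) auto
  have bound: "hardy_line (comp_op (affine_map a b) f) x \<le> ennreal (pi * (H2_norm f / sqrt a)\<^sup>2)"
    if "x > 0" for x
  proof -
    have pos: "a * x + Re b > 0" using assms(1,2) \<open>x > 0\<close> by (simp add: add_pos_nonneg)
    have "hardy_line (comp_op (affine_map a b) f) x = ennreal (1 / a) * hardy_line f (a * x + Re b)"
      by (rule hardy_line_comp_affine_map[OF hol assms(1) pos])
    also have "\<dots> \<le> ennreal (1 / a) * ennreal (pi * (H2_norm f)\<^sup>2)"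
      by (intro mult_left_mono hardy_line_le_H2_norm[OF assms(3) pos]) simp
    also have "\<dots> = ennreal (pi * (H2_norm f / sqrt a)\<^sup>2)"
      using assms(1) by (simp add: ennreal_mult[symmetric] power_divide)
    finally show ?thesis .
  qed
  from H2_normI[OF hol' _ bound]
  show "comp_op (affine_map a b) f \<in> H2"
    and "H2_norm (comp_op (affine_map a b) f) \<le> H2_norm f / sqrt a"
    using assms(1) by simp_all
qed

lemma H2_funpow_comp_affine_map:
  assumes "a > 0" and "Re b \<ge> 0" and "f \<in> H2"
  shows "(comp_op (affine_map a b) ^^ n) f \<in> H2"
  by (induction n) (simp_all add: assms H2_comp_affine_map(1))

lemma H2_norm_funpow_comp_affine_map:
  assumes "a > 0" and "Re b \<ge> 0" and "f \<in> H2"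
  shows "H2_norm ((comp_op (affine_map a b) ^^ n) f) \<le> H2_norm f / sqrt a ^ n"
proof (induction n)
  case (Suc n)
  have "H2_norm ((comp_op (affine_map a b) ^^ Suc n) f)
      \<le> H2_norm ((comp_op (affine_map a b) ^^ n) f) / sqrt a"
    using H2_comp_affine_map(2)[OF assms(1,2) H2_funpow_comp_affine_map[OF assms]] by simp
  also have "\<dots> \<le> H2_norm f / sqrt a ^ n / sqrt a"
    using Suc assms(1) by (intro divide_right_mono) simp_all
  finally show ?case by (simp add: field_simps)
qed simp

lemma H2_norm_comp_affine_map_eq:
  assumes "a > 0" and "Re b = 0" and "f \<in> H2"
  shows "H2_norm (comp_op (affine_map a b) f) = H2_norm f / sqrt a"
proof (rule antisym)
  show "H2_norm (comp_op (affine_map a b) f) \<le> H2_norm f / sqrt a"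
    using H2_comp_affine_map(2)[OF assms(1) _ assms(3)] assms(2) by simp
  let ?g = "comp_op (affine_map a b) f"
  have "f = comp_op (affine_map (1 / a) (- b / complex_of_real a)) ?g"
    using affine_map_inverse(1)[of a b] assms(1) by (simp add: fun_eq_iff comp_op_def)
  moreover have "?g \<in> H2"
    using H2_comp_affine_map(1)[OF assms(1) _ assms(3)] assms(2) by simp
  moreover have "1 / a > 0" and "Re (- b / complex_of_real a) \<ge> 0"
    using assms(1,2) by (simp_all add: Re_divide_of_real)
  ultimately have "H2_norm f \<le> H2_norm ?g / sqrt (1 / a)"
    using H2_comp_affine_map(2) by metis
  then show "H2_norm f / sqrt a \<le> H2_norm ?g"
    using assms(1) by (simp add: real_sqrt_divide divide_le_eq mult.commute)
qed

lemma H2_norm_funpow_comp_imaginary_translation: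
  assumes "Re b = 0" and "f \<in> H2"
  shows "H2_norm ((comp_op (affine_map 1 b) ^^ n) f) = H2_norm f"
proof (induction n)
  case (Suc n)
  then show ?case
    using H2_norm_comp_affine_map_eq[OF _ assms(1) H2_funpow_comp_affine_map[OF _ _ assms(2)]]
      assms(1) by simp
qed simp

section \<open>Point evaluations\<close>

lemma continuous_on_vertical_line_affine:
  assumes "f holomorphic_on rhp" and "x > 0"
  shows "continuous_on UNIV (\<lambda>t. f (Complex x (\<alpha> + \<beta> * t)))"
proof -
  have "continuous_on UNIV (\<lambda>t. \<alpha> + \<beta> * t)"
    by (intro continuous_intros)
  from continuous_on_compose2[OF continuous_on_vertical_line[OF assms] this] show ?thesis
    by simp
qed

lemma integral_square_vertical_segment_le:
  assumes "f \<in> H2" and "x > 0" and "\<beta> \<noteq> 0"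
  shows "integral {0..1} (\<lambda>t. (cmod (f (Complex x (\<alpha> + \<beta> * t))))\<^sup>2) \<le> pi * (H2_norm f)\<^sup>2 / \<bar>\<beta>\<bar>"
proof -
  have hol: "f holomorphic_on rhp" using assms(1) by (simp add: H2_def)
  define h where "h t = (cmod (f (Complex x (\<alpha> + \<beta> * t))))\<^sup>2" for t
  have "continuous_on UNIV h"
    unfolding h_def by (intro continuous_intros continuous_on_vertical_line_affine[OF hol \<open>x > 0\<close>])
  then have "(h has_integral integral {0..1} h) {0..1}"
    by (meson continuous_on_subset integrable_continuous_interval integrable_integral subset_UNIV)
  then have "(\<integral>\<^sup>+t. ennreal (h t) * indicator {0..1} t \<partial>lborel) = ennreal (integral {0..1} h)"
    by (rule nn_integral_has_integral_lebesgue'[rotated]) (simp add: h_def)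
  then have "ennreal (integral {0..1} h) = (\<integral>\<^sup>+t. ennreal (h t) * indicator {0..1} t \<partial>lborel)" ..
  also have "\<dots> \<le> (\<integral>\<^sup>+t. ennreal (h t) \<partial>lborel)"
    by (intro nn_integral_mono) (simp add: indicator_def)
  also have "\<dots> = ennreal (1 / \<bar>\<beta>\<bar>) * hardy_line f x"
  proof -
    have "hardy_line f x = ennreal \<bar>\<beta>\<bar> * (\<integral>\<^sup>+t. ennreal (h t) \<partial>lborel)"
      unfolding hardy_line_def h_def
      by (rule nn_integral_real_affine[OF hardy_line_integrand_measurable[OF hol \<open>x > 0\<close>] \<open>\<beta> \<noteq> 0\<close>])
    then show ?thesis
      using \<open>\<beta> \<noteq> 0\<close> by (simp add: mult.assoc[symmetric] ennreal_mult[symmetric])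
  qed
  also have "\<dots> \<le> ennreal (1 / \<bar>\<beta>\<bar>) * ennreal (pi * (H2_norm f)\<^sup>2)"
    by (intro mult_left_mono hardy_line_le_H2_norm assms(1,2)) simp
  finally show ?thesis
    unfolding h_def by (simp add: ennreal_mult[symmetric] ennreal_le_iff)
qed

(* AM-GM with a free parameter tau, optimised only in norm_le_H2_norm. *)
lemma integral_vertical_segment_le:
  assumes "f \<in> H2" and "x > 0" and "0 < \<rho>" and "\<rho> \<le> \<bar>\<beta>\<bar>" and "\<tau> > 0"
  shows "integral {0..1} (\<lambda>t. cmod (f (Complex x (\<alpha> + \<beta> * t))))
           \<le> \<tau> * (pi * (H2_norm f)\<^sup>2) / (2 * \<rho>) + 1 / (2 * \<tau>)"
proof -
  have hol: "f holomorphic_on rhp" using assms(1) by (simp add: H2_def)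
  define c where "c t = cmod (f (Complex x (\<alpha> + \<beta> * t)))" for t
  have "continuous_on UNIV c"
    unfolding c_def by (intro continuous_on_norm continuous_on_vertical_line_affine[OF hol \<open>x > 0\<close>])
  then have cont: "continuous_on {0..1} c"
    by (rule continuous_on_subset) simp
  have AM_GM: "c t \<le> \<tau> / 2 * (c t)\<^sup>2 + 1 / (2 * \<tau>)" for t
  proof -
    have "0 \<le> (\<tau> * c t - 1)\<^sup>2 / (2 * \<tau>)" using \<open>\<tau> > 0\<close> by simp
    also have "\<dots> = \<tau> / 2 * (c t)\<^sup>2 + 1 / (2 * \<tau>) - c t"
      using \<open>\<tau> > 0\<close> by (simp add: power2_eq_square field_simps)
    finally show ?thesis by simp
  qed
  have "integral {0..1} c \<le> integral {0..1} (\<lambda>t. \<tau> / 2 * (c t)\<^sup>2 + 1 / (2 * \<tau>))"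
    using cont by (intro integral_le AM_GM integrable_continuous_interval continuous_intros)
  also have "\<dots> = \<tau> / 2 * integral {0..1} (\<lambda>t. (c t)\<^sup>2) + 1 / (2 * \<tau>)"
    using cont by (subst integral_add) (auto intro!: integrable_continuous_interval continuous_intros)
  also have "\<dots> \<le> \<tau> / 2 * (pi * (H2_norm f)\<^sup>2 / \<rho>) + 1 / (2 * \<tau>)"
  proof -
    have "integral {0..1} (\<lambda>t. (c t)\<^sup>2) \<le> pi * (H2_norm f)\<^sup>2 / \<bar>\<beta>\<bar>"
      unfolding c_def using assms(3,4) by (intro integral_square_vertical_segment_le assms(1,2)) auto
    also have "\<dots> \<le> pi * (H2_norm f)\<^sup>2 / \<rho>"
      using assms(3,4) by (intro divide_left_mono) auto
    finally show ?thesis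
      using \<open>\<tau> > 0\<close> by (intro add_right_mono mult_left_mono) auto
  qed
  finally show ?thesis
    unfolding c_def by (simp add: mult.assoc)
qed

lemma linepath_contour_integral_bound:
  assumes cont: "continuous_on (closed_segment p q) f" and "\<rho> > 0"
    and dist: "\<And>z. z \<in> closed_segment p q \<Longrightarrow> \<rho> \<le> cmod (z - w0)"
    and len: "cmod (q - p) \<le> K * \<rho>"
  obtains I where "((\<lambda>w. f w / (w - w0)) has_contour_integral I) (linepath p q)"
    and "cmod I \<le> K * integral {0..1} (\<lambda>t. cmod (f (linepath p q t)))"
proof -
  have "w0 \<notin> closed_segment p q"
    using dist \<open>\<rho> > 0\<close> by force
  then have "continuous_on (closed_segment p q) (\<lambda>w. f w / (w - w0))"
    using cont by (intro continuous_intros) auto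
  then obtain I where I: "((\<lambda>w. f w / (w - w0)) has_contour_integral I) (linepath p q)"
    using contour_integrable_continuous_linepath contour_integrable_on_def by blast
  then have hi: "((\<lambda>t. f (linepath p q t) / (linepath p q t - w0) * (q - p)) has_integral I) {0..1}"
    by (simp add: has_contour_integral_linepath)
  have "continuous_on {0..1} (\<lambda>t. f (linepath p q t))"
    by (rule continuous_on_compose2[OF cont continuous_on_linepath]) (auto simp: linepath_image_01)
  then have bound_integrable: "(\<lambda>t. K * cmod (f (linepath p q t))) integrable_on {0..1}"
    by (intro integrable_continuous_interval continuous_intros)
  have "cmod I = norm (integral {0..1} (\<lambda>t. f (linepath p q t) / (linepath p q t - w0) * (q - p)))"
    using integral_unique[OF hi] by simp
  also have "\<dots> \<le> integral {0..1} (\<lambda>t. K * cmod (f (linepath p q t)))"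
  proof (rule integral_norm_bound_integral[OF has_integral_integrable[OF hi] bound_integrable])
    fix t :: real assume "t \<in> {0..1}"
    then have "\<rho> \<le> cmod (linepath p q t - w0)"
      by (intro dist) (auto simp: linepath_image_01 [symmetric])
    then have "cmod (f (linepath p q t)) * cmod (q - p) / cmod (linepath p q t - w0)
        \<le> cmod (f (linepath p q t)) * (K * \<rho>) / \<rho>"
      using len \<open>\<rho> > 0\<close> order_trans[OF norm_ge_zero len] by (intro frac_le mult_left_mono) auto
    then show "norm (f (linepath p q t) / (linepath p q t - w0) * (q - p))
        \<le> K * cmod (f (linepath p q t))"
      using \<open>\<rho> > 0\<close> by (simp add: norm_mult norm_divide mult.commute)
  qed
  finally show ?thesis
    using I that by simp
qed

lemma linepath_Complex:
  "linepath (Complex p1 p2) (Complex q1 q2) t = Complex (p1 + (q1 - p1) * t) (p2 + (q2 - p2) * t)"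
  by (simp add: linepath_def complex_eq_iff algebra_simps)

lemma Cauchy_integral_formula_rectpath:
  assumes "f holomorphic_on S" and "open S" and "convex S" and "cbox a b \<subseteq> S" and "w0 \<in> box a b"
  shows "((\<lambda>w. f w / (w - w0)) has_contour_integral 2 * pi * \<i> * f w0) (rectpath a b)"
proof -
  have ab: "Re a \<le> Re b" "Im a \<le> Im b"
    using assms(5) by (auto simp: in_box_complex_iff)
  have "((\<lambda>w. f w / (w - w0)) has_contour_integral 2 * pi * \<i> * winding_number (rectpath a b) w0 * f w0)
      (rectpath a b)"
  proof (rule Cauchy_integral_formula_weak[OF assms(3) finite.emptyI])
    show "continuous_on S f"
      using assms(1) by (rule holomorphic_on_imp_continuous_on)
    show "f field_differentiable at x" if "x \<in> interior S - {}" for x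
      using that assms(1,2) by (auto simp: interior_open holomorphic_on_imp_differentiable_at)
    show "w0 \<in> interior S - {}"
      using assms(2,4,5) box_subset_cbox by (auto simp: interior_open)
    show "path_image (rectpath a b) \<subseteq> S - {w0}"
      using assms(4,5) ab by (auto simp: path_image_rectpath_cbox_minus_box)
  qed auto
  then show ?thesis
    using winding_number_rectpath[OF assms(5)] by simp
qed

lemma rectpath_centred_bounds:
  assumes "0 < r" and "r \<le> L"
    and z: "z \<in> path_image (rectpath (Complex (x0 - r) (y0 - L)) (Complex (x0 + r) (y0 + L)))"
  shows "r \<le> cmod (z - Complex x0 y0)" and "x0 - r \<le> Re z"
proof -
  have boundary: "(Re z \<in> {x0 - r, x0 + r} \<and> Im z \<in> {y0 - L..y0 + L}) \<or>
                  (Im z \<in> {y0 - L, y0 + L} \<and> Re z \<in> {x0 - r..x0 + r})"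
    using z assms(1,2) by (subst (asm) path_image_rectpath) auto
  then have "r \<le> \<bar>Re (z - Complex x0 y0)\<bar> \<or> r \<le> \<bar>Im (z - Complex x0 y0)\<bar>"
    using assms(2) by auto
  then show "r \<le> cmod (z - Complex x0 y0)"
    using abs_Re_le_cmod abs_Im_le_cmod order_trans by metis
  show "x0 - r \<le> Re z"
    using boundary assms(1) by auto
qed

(* Cauchy's formula on the rectangle with centre x0 + i y0, half-width r and half-height L:
   each side has length at most 4 r and stays at distance at least r from the centre. *)
lemma norm_le_integrals_rectangle_sides:
  assumes hol: "f holomorphic_on rhp" and r: "0 < r" "r < x0" and L: "r \<le> L" "L \<le> 2 * r"
  shows "pi * cmod (f (Complex x0 y0)) \<le>
     2 * (integral {0..1} (\<lambda>t. cmod (f (Complex (x0 - r + 2 * r * t) (y0 - L))))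
        + integral {0..1} (\<lambda>t. cmod (f (Complex (x0 + r) (y0 - L + 2 * L * t))))
        + integral {0..1} (\<lambda>t. cmod (f (Complex (x0 + r - 2 * r * t) (y0 + L))))
        + integral {0..1} (\<lambda>t. cmod (f (Complex (x0 - r) (y0 + L - 2 * L * t)))))"
proof -
  define w0 where "w0 = Complex x0 y0"
  define a1 where "a1 = Complex (x0 - r) (y0 - L)"
  define a2 where "a2 = Complex (x0 + r) (y0 - L)"
  define a3 where "a3 = Complex (x0 + r) (y0 + L)"
  define a4 where "a4 = Complex (x0 - r) (y0 + L)"
  define g where "g w = f w / (w - w0)" for w
  define J where "J p q = integral {0..1} (\<lambda>t. cmod (f (linepath p q t)))" for p q
  let ?R = "path_image (rectpath a1 a3)"
  have rect: "rectpath a1 a3 = linepath a1 a2 +++ linepath a2 a3 +++ linepath a3 a4 +++ linepath a4 a1"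
    by (simp add: rectpath_def Let_def a1_def a2_def a3_def a4_def)
  have R_eq: "?R = closed_segment a1 a2 \<union> closed_segment a2 a3 \<union> closed_segment a3 a4 \<union> closed_segment a4 a1"
    unfolding rect by (simp add: path_image_join Un_assoc)
  have dist_R: "r \<le> cmod (z - w0)" and R_rhp: "z \<in> rhp" if "z \<in> ?R" for z
    using rectpath_centred_bounds[OF r(1) L(1), of z x0 y0] that r
    unfolding a1_def a3_def w0_def rhp_def by auto
  have cont_f: "continuous_on rhp f"
    by (rule holomorphic_on_imp_continuous_on[OF hol])
  have side: "\<exists>I. (g has_contour_integral I) (linepath p q) \<and> cmod I \<le> 4 * J p q"
    if seg: "closed_segment p q \<subseteq> ?R" and len: "cmod (q - p) \<le> 4 * r" for p q
  proof -
    have "continuous_on (closed_segment p q) f"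
      using seg R_rhp by (blast intro: continuous_on_subset[OF cont_f])
    from linepath_contour_integral_bound[OF this \<open>0 < r\<close> _ len] dist_R seg
    show ?thesis
      unfolding g_def J_def by blast
  qed
  have len: "cmod (a2 - a1) \<le> 4 * r" "cmod (a3 - a2) \<le> 4 * r" "cmod (a4 - a3) \<le> 4 * r"
    "cmod (a1 - a4) \<le> 4 * r"
    using r L cmod_le[of "a2 - a1"] cmod_le[of "a3 - a2"] cmod_le[of "a4 - a3"] cmod_le[of "a1 - a4"]
    by (simp_all add: a1_def a2_def a3_def a4_def)
  obtain I1 I2 I3 I4 where
    I1: "(g has_contour_integral I1) (linepath a1 a2)" "cmod I1 \<le> 4 * J a1 a2" and
    I2: "(g has_contour_integral I2) (linepath a2 a3)" "cmod I2 \<le> 4 * J a2 a3" and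
    I3: "(g has_contour_integral I3) (linepath a3 a4)" "cmod I3 \<le> 4 * J a3 a4" and
    I4: "(g has_contour_integral I4) (linepath a4 a1)" "cmod I4 \<le> 4 * J a4 a1"
    using side[OF _ len(1)] side[OF _ len(2)] side[OF _ len(3)] side[OF _ len(4)] unfolding R_eq
    by blast
  have "(g has_contour_integral (I1 + (I2 + (I3 + I4)))) (rectpath a1 a3)"
    unfolding rect by (intro has_contour_integral_join I1(1) I2(1) I3(1) I4(1) valid_path_join) auto
  moreover have "(g has_contour_integral 2 * pi * \<i> * f w0) (rectpath a1 a3)"
    unfolding g_def using r L
    by (intro Cauchy_integral_formula_rectpath[OF hol open_rhp convex_rhp])
      (auto simp: a1_def a3_def w0_def in_box_complex_iff in_cbox_complex_iff rhp_def subset_iff)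
  ultimately have "2 * pi * \<i> * f w0 = I1 + (I2 + (I3 + I4))"
    by (rule has_contour_integral_unique[rotated])
  then have "2 * pi * cmod (f w0) = cmod (I1 + (I2 + (I3 + I4)))"
    by (metis norm_mult norm_ii norm_of_real mult_1_right abs_of_nonneg pi_ge_zero
        norm_numeral mult_nonneg_nonneg zero_le_numeral)
  also have "\<dots> \<le> cmod I1 + cmod I2 + cmod I3 + cmod I4"
    by (smt (verit) norm_triangle_ineq)
  also have "\<dots> \<le> 4 * (J a1 a2 + J a2 a3 + J a3 a4 + J a4 a1)"
    using I1(2) I2(2) I3(2) I4(2) by simp
  finally have "pi * cmod (f w0) \<le> 2 * (J a1 a2 + J a2 a3 + J a3 a4 + J a4 a1)"
    by simp
  moreover have "linepath a1 a2 = (\<lambda>t. Complex (x0 - r + 2 * r * t) (y0 - L))"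
    "linepath a2 a3 = (\<lambda>t. Complex (x0 + r) (y0 - L + 2 * L * t))"
    "linepath a3 a4 = (\<lambda>t. Complex (x0 + r - 2 * r * t) (y0 + L))"
    "linepath a4 a1 = (\<lambda>t. Complex (x0 - r) (y0 + L - 2 * L * t))"
    by (simp_all add: fun_eq_iff a1_def a2_def a3_def a4_def linepath_Complex algebra_simps)
  ultimately show ?thesis
    by (simp add: J_def w0_def)
qed

lemma integral_integral_segments_le:
  fixes p q u v :: real
  assumes f: "f \<in> H2" and "\<tau> > 0" and "0 < \<rho>" and "\<rho> \<le> \<bar>v\<bar>"
    and pos: "\<And>t. t \<in> {0..1} \<Longrightarrow> p + q * t > 0"
  defines "F \<equiv> \<lambda>s t. cmod (f (Complex (p + q * t) (u + v * s)))"
  shows "(\<lambda>s. integral {0..1} (F s)) integrable_on {0..1}"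
    and "integral {0..1} (\<lambda>s. integral {0..1} (F s)) \<le> \<tau> * (pi * (H2_norm f)\<^sup>2) / (2 * \<rho>) + 1 / (2 * \<tau>)"
proof -
  have cm: "continuous_on ({0..1} \<times> {0..1}) (\<lambda>z::real \<times> real. Complex (p + q * snd z) (u + v * fst z))"
    unfolding Complex_eq by (intro continuous_intros)
  have im: "(\<lambda>z::real \<times> real. Complex (p + q * snd z) (u + v * fst z)) ` ({0..1} \<times> {0..1}) \<subseteq> rhp"
    using pos by auto
  have "continuous_on ({0..1} \<times> {0..1}) (\<lambda>z. f (Complex (p + q * snd z) (u + v * fst z)))"
    using f by (intro continuous_on_compose2[OF _ cm im]) (simp add: H2_def holomorphic_on_imp_continuous_on)
  then have "continuous_on ({0..1} \<times> {0..1}) (\<lambda>z. F (fst z) (snd z))"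
    unfolding F_def by (intro continuous_intros)
  then have cont01: "continuous_on ({0..1} \<times> {0..1}) (\<lambda>(s, t). F s t)"
    by (simp only: case_prod_beta')
  then have cont: "continuous_on (cbox (0, 0) (1, 1)) (\<lambda>(s, t). F s t)"
    unfolding cbox_Pair_eq by (simp only: cbox_interval)
  have "continuous_on {0..1} (\<lambda>s. integral (cbox 0 1) (F s))"
    by (rule integral_continuous_on_param) (use cont01 in \<open>simp add: cbox_interval\<close>)
  then show "(\<lambda>s. integral {0..1} (F s)) integrable_on {0..1}"
    using integrable_continuous_interval by (simp add: cbox_interval)
  have "continuous_on ({0..1} \<times> {0..1}) ((\<lambda>(s, t). F s t) \<circ> prod.swap)"
    by (rule continuous_on_compose[OF continuous_on_swap])
      (use cont01 in \<open>simp add: product_swap\<close>)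
  then have "continuous_on {0..1} (\<lambda>t. integral (cbox 0 1) (\<lambda>s. F s t))"
    by (intro integral_continuous_on_param) (simp add: comp_def case_prod_beta' cbox_interval)
  then have inner_integrable: "(\<lambda>t. integral {0..1} (\<lambda>s. F s t)) integrable_on {0..1}"
    using integrable_continuous_interval by (simp add: cbox_interval)
  have "integral {0..1} (\<lambda>s. integral {0..1} (F s)) = integral {0..1} (\<lambda>t. integral {0..1} (\<lambda>s. F s t))"
    using integral_swap_continuous[OF cont] by (simp add: cbox_interval)
  also have "\<dots> \<le> integral {0..1} (\<lambda>t::real. \<tau> * (pi * (H2_norm f)\<^sup>2) / (2 * \<rho>) + 1 / (2 * \<tau>))"
  proof (rule integral_le[OF inner_integrable integrable_const_ivl])
    fix t :: real assume "t \<in> {0..1}"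
    show "integral {0..1} (\<lambda>s. F s t) \<le> \<tau> * (pi * (H2_norm f)\<^sup>2) / (2 * \<rho>) + 1 / (2 * \<tau>)"
      unfolding F_def by (rule integral_vertical_segment_le[OF f pos[OF \<open>t \<in> {0..1}\<close>] assms(3,4,2)])
  qed
  finally show "integral {0..1} (\<lambda>s. integral {0..1} (F s)) \<le> \<tau> * (pi * (H2_norm f)\<^sup>2) / (2 * \<rho>) + 1 / (2 * \<tau>)"
    by simp
qed

lemma norm_le_horizontal_integrals:
  assumes f: "f \<in> H2" and r: "0 < r" "r < x0" and "\<tau> > 0" and "s \<in> {0..1}"
  shows "pi * cmod (f (Complex x0 y0))
    \<le> 2 * (integral {0..1} (\<lambda>t. cmod (f (Complex (x0 - r + 2 * r * t) (y0 - r - r * s))))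
          + integral {0..1} (\<lambda>t. cmod (f (Complex (x0 + r - 2 * r * t) (y0 + r + r * s)))))
      + (\<tau> * pi * (H2_norm f)\<^sup>2 / r + 2 / \<tau>)"
proof -
  define H where "H = pi * (H2_norm f)\<^sup>2"
  define L where "L = r + r * s"
  have L: "r \<le> L" "L \<le> 2 * r" using assms(5) r by (auto simp: L_def)
  have hol: "f holomorphic_on rhp"
    using f by (simp add: H2_def)
  have right: "integral {0..1} (\<lambda>t. cmod (f (Complex (x0 + r) (y0 - L + 2 * L * t))))
      \<le> \<tau> * H / (2 * (2 * r)) + 1 / (2 * \<tau>)"
    using integral_vertical_segment_le[OF f, where x = "x0 + r" and \<rho> = "2 * r" and \<beta> = "2 * L"
        and \<alpha> = "y0 - L"] r L \<open>\<tau> > 0\<close>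
    unfolding H_def by simp
  have left: "integral {0..1} (\<lambda>t. cmod (f (Complex (x0 - r) (y0 + L - 2 * L * t))))
      \<le> \<tau> * H / (2 * (2 * r)) + 1 / (2 * \<tau>)"
    using integral_vertical_segment_le[OF f, where x = "x0 - r" and \<rho> = "2 * r" and \<beta> = "- (2 * L)"
        and \<alpha> = "y0 + L"] r L \<open>\<tau> > 0\<close>
    unfolding H_def by simp
  have "\<tau> * pi * (H2_norm f)\<^sup>2 / r + 2 / \<tau> = 4 * (\<tau> * H / (2 * (2 * r)) + 1 / (2 * \<tau>))"
    using r \<open>\<tau> > 0\<close> by (simp add: H_def field_simps)
  moreover have "y0 - r - r * s = y0 - L" "y0 + r + r * s = y0 + L"
    by (simp_all add: L_def)
  ultimately show ?thesis
    using norm_le_integrals_rectangle_sides[OF hol r L, of y0] right left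
    by (simp only:) (smt (verit))
qed

(* Averaging over the half-height r + r s of the rectangle turns its horizontal sides into
   integrals along vertical lines. *)
lemma norm_le_H2_norm_AM_GM:
  assumes f: "f \<in> H2" and r: "0 < r" "r < x0" and "\<tau> > 0"
  shows "pi * cmod (f (Complex x0 y0)) \<le> 3 * pi * (H2_norm f)\<^sup>2 / r * \<tau> + 4 / \<tau>"
proof -
  define H where "H = pi * (H2_norm f)\<^sup>2"
  define Bot where "Bot s = integral {0..1} (\<lambda>t. cmod (f (Complex (x0 - r + 2 * r * t) (y0 - r - r * s))))" for s
  define Top where "Top s = integral {0..1} (\<lambda>t. cmod (f (Complex (x0 + r - 2 * r * t) (y0 + r + r * s))))" for s
  have pos_bot: "x0 - r + 2 * r * t > 0" and pos_top: "x0 + r + - (2 * r) * t > 0" if "t \<in> {0..1}" for t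
  proof -
    have "0 \<le> 2 * r * t" "2 * r * t \<le> 2 * r"
      using that r by (simp_all add: mult_left_le)
    then show "x0 - r + 2 * r * t > 0" "x0 + r + - (2 * r) * t > 0"
      using r by linarith+
  qed
  have bot: "Bot integrable_on {0..1}" "integral {0..1} Bot \<le> \<tau> * H / (2 * r) + 1 / (2 * \<tau>)"
    using integral_integral_segments_le[OF f \<open>\<tau> > 0\<close> r(1) _ pos_bot, of "- r" "y0 - r"]
    unfolding Bot_def[abs_def] H_def by simp_all
  have top: "Top integrable_on {0..1}" "integral {0..1} Top \<le> \<tau> * H / (2 * r) + 1 / (2 * \<tau>)"
    using integral_integral_segments_le[OF f \<open>\<tau> > 0\<close> r(1) _ pos_top, of r "y0 + r"]
    unfolding Top_def[abs_def] H_def by simp_all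
  have "pi * cmod (f (Complex x0 y0)) = integral {0..1} (\<lambda>s::real. pi * cmod (f (Complex x0 y0)))"
    by simp
  also have "\<dots> \<le> integral {0..1} (\<lambda>s. 2 * (Bot s + Top s) + (\<tau> * H / r + 2 / \<tau>))"
  proof (intro integral_le integrable_add integrable_on_mult_right integrable_const_ivl bot(1) top(1))
    show "pi * cmod (f (Complex x0 y0)) \<le> 2 * (Bot s + Top s) + (\<tau> * H / r + 2 / \<tau>)"
      if "s \<in> {0..1}" for s
      using norm_le_horizontal_integrals[OF f r \<open>\<tau> > 0\<close> that, of y0]
      by (simp add: Bot_def Top_def H_def mult.assoc)
  qed
  also have "\<dots> = 2 * (integral {0..1} Bot + integral {0..1} Top) + (\<tau> * H / r + 2 / \<tau>)"
  proof -
    have sum: "(\<lambda>s. 2 * (Bot s + Top s)) integrable_on {0..1}"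
      using bot(1) top(1) by (intro integrable_add integrable_on_mult_right)
    show ?thesis
      by (simp only: integral_add[OF sum integrable_const_ivl] integral_mult_right
          integral_add[OF bot(1) top(1)] integral_const_real) simp
  qed
  also have "\<dots> \<le> 3 * H / r * \<tau> + 4 / \<tau>"
  proof -
    have "4 * (\<tau> * H / (2 * r) + 1 / (2 * \<tau>)) + (\<tau> * H / r + 2 / \<tau>) = 3 * H / r * \<tau> + 4 / \<tau>"
      using \<open>\<tau> > 0\<close> r by (simp add: field_simps)
    then show ?thesis
      using bot(2) top(2) by (smt (verit))
  qed
  finally show ?thesis by (simp add: H_def)
qed

lemma norm_le_H2_norm:
  assumes f: "f \<in> H2" and "0 < r" and "r < Re w"
  shows "cmod (f w) \<le> 4 * H2_norm f / sqrt r"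
proof -
  define N where "N = H2_norm f"
  have "pi * cmod (f w) \<le> 0 + 2 * sqrt (3 * pi * N\<^sup>2 / r * 4)"
  proof (rule le_add_two_sqrt_mult)
    fix \<tau> :: real assume "\<tau> > 0"
    from norm_le_H2_norm_AM_GM[OF f \<open>0 < r\<close> \<open>r < Re w\<close> this, of "Im w"]
    show "pi * cmod (f w) \<le> 0 + 3 * pi * N\<^sup>2 / r * \<tau> + 4 / \<tau>"
      by (simp add: N_def)
  qed (use \<open>0 < r\<close> in simp_all)
  also have "\<dots> = sqrt (3 * pi) * (4 * N / sqrt r)"
  proof -
    have "sqrt 12 = 2 * sqrt 3"
      using real_sqrt_mult[of 4 3] by (simp add: real_sqrt_four)
    then show ?thesis
      using \<open>0 < r\<close> by (simp add: N_def real_sqrt_mult real_sqrt_divide)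
  qed
  also have "\<dots> \<le> pi * (4 * N / sqrt r)"
  proof (intro mult_right_mono)
    have "3 * pi \<le> pi\<^sup>2" using pi_gt3 by (simp add: power2_eq_square)
    then show "sqrt (3 * pi) \<le> pi" by (simp add: real_le_lsqrt)
  qed (use \<open>0 < r\<close> in \<open>simp add: N_def\<close>)
  finally show ?thesis
    unfolding N_def by (simp only: mult_le_cancel_left_pos[OF pi_gt_zero])
qed

section \<open>Convergent series\<close>

lemma H2_pointwise_limit:
  assumes S: "\<And>n. S n \<in> H2" and bound: "\<And>n. H2_norm (S n) \<le> C"
    and hol: "F holomorphic_on rhp" and lim: "\<And>w. w \<in> rhp \<Longrightarrow> (\<lambda>n. S n w) \<longlonglongrightarrow> F w"
  shows "F \<in> H2" and "H2_norm F \<le> C"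
proof -
  have "C \<ge> 0" using bound[of 0] H2_norm_nonneg[of "S 0"] by linarith
  have "hardy_line F x \<le> ennreal (pi * C\<^sup>2)" if "x > 0" for x
  proof -
    let ?L = "\<lambda>n y. ennreal ((cmod (S n (Complex x y)))\<^sup>2)"
    have "?L n \<in> borel_measurable lborel" for n
      using hardy_line_integrand_measurable[of "S n" x] S \<open>x > 0\<close> by (simp add: H2_def)
    moreover have "liminf (\<lambda>n. ?L n y) = ennreal ((cmod (F (Complex x y)))\<^sup>2)" for y
      using lim[of "Complex x y"] \<open>x > 0\<close>
      by (intro lim_imp_Liminf) (auto intro!: tendsto_ennrealI tendsto_intros)
    ultimately have "hardy_line F x \<le> liminf (\<lambda>n. hardy_line (S n) x)"
      unfolding hardy_line_def using nn_integral_liminf[of "?L" lborel] by simp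
    also have "\<dots> \<le> limsup (\<lambda>n. hardy_line (S n) x)"
      by (rule Liminf_le_Limsup) simp
    also have "\<dots> \<le> ennreal (pi * C\<^sup>2)"
    proof (rule Limsup_bounded, rule always_eventually, rule allI)
      fix n
      have "hardy_line (S n) x \<le> ennreal (pi * (H2_norm (S n))\<^sup>2)"
        by (rule hardy_line_le_H2_norm[OF S \<open>x > 0\<close>])
      also have "\<dots> \<le> ennreal (pi * C\<^sup>2)"
        using bound[of n] by (intro ennreal_leI mult_left_mono power_mono) simp_all
      finally show "hardy_line (S n) x \<le> ennreal (pi * C\<^sup>2)" .
    qed
    finally show ?thesis .
  qed
  then show "F \<in> H2" and "H2_norm F \<le> C"
    using H2_normI[OF hol \<open>C \<ge> 0\<close>] by simp_all
qed

lemma H2_series_uniform_limit: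
  assumes g: "\<And>k. g k \<in> H2" and c: "\<And>k. H2_norm (g k) \<le> c k" and "summable c" and "w \<in> rhp"
  shows "cball w (Re w / 2) \<subseteq> rhp"
    and "uniform_limit (cball w (Re w / 2)) (\<lambda>n z. \<Sum>k<n. g k z) (\<lambda>z. \<Sum>k. g k z) sequentially"
proof -
  have "Re w > 0" using \<open>w \<in> rhp\<close> by (simp add: rhp_def)
  have Re_near: "Re w / 2 \<le> Re z" if "z \<in> cball w (Re w / 2)" for z
    using that abs_Re_le_cmod[of "w - z"] by (simp add: dist_norm)
  then show "cball w (Re w / 2) \<subseteq> rhp"
    using \<open>Re w > 0\<close> by (force simp: rhp_def)
  have "cmod (g k z) \<le> 8 / sqrt (Re w) * c k" if "z \<in> cball w (Re w / 2)" for k z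
  proof -
    have "cmod (g k z) \<le> 4 * H2_norm (g k) / sqrt (Re w / 4)"
      using Re_near[OF that] \<open>Re w > 0\<close> by (intro norm_le_H2_norm[OF g]) auto
    also have "\<dots> = 8 / sqrt (Re w) * H2_norm (g k)"
      by (simp add: real_sqrt_divide real_sqrt_four)
    also have "\<dots> \<le> 8 / sqrt (Re w) * c k"
      using c \<open>Re w > 0\<close> by (intro mult_left_mono) auto
    finally show ?thesis .
  qed
  then show "uniform_limit (cball w (Re w / 2)) (\<lambda>n z. \<Sum>k<n. g k z) (\<lambda>z. \<Sum>k. g k z) sequentially"
    using \<open>summable c\<close> by (intro Weierstrass_m_test[of _ _ "\<lambda>k. 8 / sqrt (Re w) * c k"])
      (auto intro: summable_mult)
qed

lemma H2_suminf:
  assumes g: "\<And>k. g k \<in> H2" and c: "\<And>k. H2_norm (g k) \<le> c k" and "summable c"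
  shows "\<And>w. w \<in> rhp \<Longrightarrow> summable (\<lambda>k. g k w)"
    and "(\<lambda>w. \<Sum>k. g k w) \<in> H2" and "H2_norm (\<lambda>w. \<Sum>k. g k w) \<le> (\<Sum>k. c k)"
proof -
  note uniform = H2_series_uniform_limit[OF g c \<open>summable c\<close>]
  have lim: "(\<lambda>n. \<Sum>k<n. g k w) \<longlonglongrightarrow> (\<Sum>k. g k w)" if "w \<in> rhp" for w
    using tendsto_uniform_limitI[OF uniform(2)[OF that], of w] that by (simp add: rhp_def)
  then show "summable (\<lambda>k. g k w)" if "w \<in> rhp" for w
    using that by (auto simp: summable_def sums_def)
  have "(\<lambda>w. \<Sum>k. g k w) holomorphic_on rhp"
  proof (rule holomorphic_uniform_sequence[OF open_rhp])
    show "(\<lambda>z. \<Sum>k<n. g k z) holomorphic_on rhp" for n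
      using g by (intro holomorphic_on_sum) (auto simp: H2_def)
    show "\<exists>d>0. cball w d \<subseteq> rhp \<and>
        uniform_limit (cball w d) (\<lambda>n z. \<Sum>k<n. g k z) (\<lambda>z. \<Sum>k. g k z) sequentially"
      if "w \<in> rhp" for w
      using uniform[OF that] that by (intro exI[of _ "Re w / 2"]) (simp add: rhp_def)
  qed
  moreover have "(\<lambda>w. \<Sum>k<n. g k w) \<in> H2 \<and> H2_norm (\<lambda>w. \<Sum>k<n. g k w) \<le> (\<Sum>k. c k)" for n
  proof -
    have "H2_norm (\<lambda>w. \<Sum>k<n. g k w) \<le> (\<Sum>k<n. H2_norm (g k))"
      using g by (intro H2_sum) auto
    also have "\<dots> \<le> (\<Sum>k<n. c k)"
      using c by (intro sum_mono)
    also have "\<dots> \<le> (\<Sum>k. c k)"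
      using \<open>summable c\<close> c order_trans[OF H2_norm_nonneg] by (intro sum_le_suminf) auto
    finally show ?thesis
      using g by (simp add: H2_sum)
  qed
  ultimately show "(\<lambda>w. \<Sum>k. g k w) \<in> H2" and "H2_norm (\<lambda>w. \<Sum>k. g k w) \<le> (\<Sum>k. c k)"
    using H2_pointwise_limit[of "\<lambda>n w. \<Sum>k<n. g k w" "\<Sum>k. c k" "\<lambda>w. \<Sum>k. g k w"] lim by blast+
qed

lemma H2_suminf_funpow_comp_affine_map:
  assumes "a > 1" and "Re b \<ge> 0" and e: "\<And>k. e k \<in> H2" "\<And>k. H2_norm (e k) \<le> \<delta>"
  defines "S \<equiv> comp_op (affine_map a b)"
  shows "\<And>w. w \<in> rhp \<Longrightarrow> summable (\<lambda>k. (S ^^ Suc k) (e k) w)"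
    and "(\<lambda>w. \<Sum>k. (S ^^ Suc k) (e k) w) \<in> H2"
    and "H2_norm (\<lambda>w. \<Sum>k. (S ^^ Suc k) (e k) w) \<le> \<delta> / (sqrt a - 1)"
proof -
  define q where "q = 1 / sqrt a"
  have "a > 0" and q: "0 < q" "q < 1"
    using assms(1) by (simp_all add: q_def)
  have terms: "(S ^^ Suc k) (e k) \<in> H2" "H2_norm ((S ^^ Suc k) (e k)) \<le> \<delta> * q * q ^ k" for k
  proof -
    show "(S ^^ Suc k) (e k) \<in> H2"
      unfolding S_def by (rule H2_funpow_comp_affine_map[OF \<open>a > 0\<close> assms(2) e(1)])
    have "H2_norm ((S ^^ Suc k) (e k)) \<le> H2_norm (e k) * q ^ Suc k"
      using H2_norm_funpow_comp_affine_map[OF \<open>a > 0\<close> assms(2) e(1), of "Suc k"]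
      by (simp add: S_def q_def power_one_over)
    also have "\<dots> \<le> \<delta> * q ^ Suc k"
      using e(2) q by (intro mult_right_mono) auto
    finally show "H2_norm ((S ^^ Suc k) (e k)) \<le> \<delta> * q * q ^ k"
      by (simp add: mult_ac)
  qed
  have "summable (\<lambda>k. \<delta> * q * q ^ k)"
    using q by (intro summable_mult summable_geometric) simp
  note series = H2_suminf[OF terms this]
  show "summable (\<lambda>k. (S ^^ Suc k) (e k) w)" if "w \<in> rhp" for w
    by (rule series(1)[OF that])
  show "(\<lambda>w. \<Sum>k. (S ^^ Suc k) (e k) w) \<in> H2"
    by (rule series(2))
  have "(\<Sum>k. \<delta> * q * q ^ k) = \<delta> * q * (1 / (1 - q))"
    using q by (simp add: suminf_mult summable_geometric suminf_geometric)
  also have "\<dots> = \<delta> / (sqrt a - 1)"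
    using assms(1) by (simp add: q_def field_simps)
  finally show "H2_norm (\<lambda>w. \<Sum>k. (S ^^ Suc k) (e k) w) \<le> \<delta> / (sqrt a - 1)"
    using series(3) by simp
qed

section \<open>Shadowing\<close>

lemma positive_shadowing_H2_contraction:
  assumes maps: "\<And>f. f \<in> H2 \<Longrightarrow> T f \<in> H2"
    and contr: "\<And>f. f \<in> H2 \<Longrightarrow> H2_norm (T f) \<le> q * H2_norm f"
    and linear: "\<And>f g. T (\<lambda>w. f w - g w) = (\<lambda>w. T f w - T g w)"
    and "0 \<le> q" and "q < 1"
  shows "positive_shadowing H2 H2_dist T"
  unfolding positive_shadowing_def
proof (intro allI impI)
  fix \<epsilon> :: real assume "\<epsilon> > 0"
  show "\<exists>\<delta>>0. \<forall>xs. (\<forall>n. xs n \<in> H2) \<and> (\<forall>n. H2_dist (T (xs n)) (xs (Suc n)) \<le> \<delta>) \<longrightarrow>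
          (\<exists>x\<in>H2. \<forall>n. H2_dist ((T ^^ n) x) (xs n) \<le> \<epsilon>)"
  proof (intro exI[of _ "\<epsilon> * (1 - q)"] conjI allI impI)
    show "\<epsilon> * (1 - q) > 0" using \<open>\<epsilon> > 0\<close> \<open>q < 1\<close> by simp
    fix xs assume xs: "(\<forall>n. xs n \<in> H2) \<and> (\<forall>n. H2_dist (T (xs n)) (xs (Suc n)) \<le> \<epsilon> * (1 - q))"
    have "(\<lambda>w. (T ^^ n) (xs 0) w - xs n w) \<in> H2 \<and> H2_norm (\<lambda>w. (T ^^ n) (xs 0) w - xs n w) \<le> \<epsilon>" for n
    proof (induction n)
      case 0
      then show ?case using \<open>\<epsilon> > 0\<close> by (simp add: H2_zero H2_norm_zero)
    next
      case (Suc n)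
      define g where "g w = (T ^^ n) (xs 0) w - xs n w" for w
      define e where "e w = T (xs n) w - xs (Suc n) w" for w
      have g: "g \<in> H2" "H2_norm g \<le> \<epsilon>" using Suc by (simp_all add: g_def[abs_def])
      have e: "e \<in> H2" "H2_norm e \<le> \<epsilon> * (1 - q)"
        using xs maps H2_diff(1) unfolding e_def[abs_def] H2_dist_def by auto
      have "(\<lambda>w. (T ^^ Suc n) (xs 0) w - xs (Suc n) w) = (\<lambda>w. T g w + e w)"
        unfolding g_def[abs_def] e_def[abs_def] linear by simp
      moreover have "H2_norm (\<lambda>w. T g w + e w) \<le> q * H2_norm g + H2_norm e"
        using H2_add(2)[OF maps[OF g(1)] e(1)] contr[OF g(1)] by linarith
      moreover have "q * H2_norm g \<le> q * \<epsilon>"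
        using g(2) \<open>0 \<le> q\<close> by (rule mult_left_mono)
      ultimately show ?case
        using H2_add(1)[OF maps[OF g(1)] e(1)] e(2) by (simp add: algebra_simps)
    qed
    then show "\<exists>x\<in>H2. \<forall>n. H2_dist ((T ^^ n) x) (xs n) \<le> \<epsilon>"
      using xs unfolding H2_dist_def by blast
  qed
qed

lemma positive_shadowing_comp_affine_map_contracting:
  assumes "a > 1" and "Re b \<ge> 0"
  shows "positive_shadowing H2 H2_dist (comp_op (affine_map a b))"
proof (rule positive_shadowing_H2_contraction)
  show "comp_op (affine_map a b) f \<in> H2" if "f \<in> H2" for f
    using H2_comp_affine_map(1)[OF _ assms(2) that] assms(1) by simp
  show "H2_norm (comp_op (affine_map a b) f) \<le> 1 / sqrt a * H2_norm f" if "f \<in> H2" for f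
    using H2_comp_affine_map(2)[OF _ assms(2) that] assms(1) by simp
  show "comp_op (affine_map a b) (\<lambda>w. f w - g w)
          = (\<lambda>w. comp_op (affine_map a b) f w - comp_op (affine_map a b) g w)" for f g
    by (simp add: comp_op_def comp_def)
qed (use assms(1) in simp_all)

(* For a left inverse psi of phi, the shadowing point of an expanding composition operator is
   x_m + sum_k C_psi^(k+1) (x_(m+k+1) - C_phi x_(m+k)); applying C_phi shifts m. *)
lemma comp_op_backward_sum_step:
  assumes inverse: "\<And>w. \<psi> (\<phi> w) = w"
    and summable: "summable (\<lambda>k. (comp_op \<psi> ^^ Suc k) (e (m + k)) (\<phi> w))"
    and error: "e m w = xs (Suc m) w - comp_op \<phi> (xs m) w"
  shows "comp_op \<phi> (\<lambda>v. xs m v + (\<Sum>k. (comp_op \<psi> ^^ Suc k) (e (m + k)) v)) w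
           = xs (Suc m) w + (\<Sum>k. (comp_op \<psi> ^^ Suc k) (e (Suc m + k)) (w :: complex))"
proof -
  have shift: "(comp_op \<psi> ^^ Suc k) f (\<phi> w) = (comp_op \<psi> ^^ k) f w" for k and f :: "complex \<Rightarrow> complex"
  proof -
    have "(\<psi> ^^ Suc k) (\<phi> w) = (\<psi> ^^ k) w"
      by (simp only: funpow_Suc_right o_apply inverse)
    then show ?thesis
      by (simp only: funpow_comp_op_apply)
  qed
  from summable have "summable (\<lambda>k. (comp_op \<psi> ^^ k) (e (m + k)) w)"
    by (simp only: shift)
  from suminf_split_head[OF this]
  have split: "(\<Sum>k. (comp_op \<psi> ^^ k) (e (m + k)) w)
      = e m w + (\<Sum>k. (comp_op \<psi> ^^ Suc k) (e (Suc m + k)) w)"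
    by simp
  have "comp_op \<phi> (\<lambda>v. xs m v + (\<Sum>k. (comp_op \<psi> ^^ Suc k) (e (m + k)) v)) w
      = xs m (\<phi> w) + (\<Sum>k. (comp_op \<psi> ^^ Suc k) (e (m + k)) (\<phi> w))"
    by (simp only: comp_op_def o_apply)
  also have "\<dots> = xs m (\<phi> w) + e m w + (\<Sum>k. (comp_op \<psi> ^^ Suc k) (e (Suc m + k)) w)"
    by (simp only: shift split add.assoc)
  also have "\<dots> = xs (Suc m) w + (\<Sum>k. (comp_op \<psi> ^^ Suc k) (e (Suc m + k)) w)"
    using error by (simp add: comp_op_def)
  finally show ?thesis .
qed

lemma funpow_comp_op_eqI:
  assumes invariant: "\<And>w. w \<in> A \<Longrightarrow> \<phi> w \<in> A"
    and step: "\<And>m w. w \<in> A \<Longrightarrow> comp_op \<phi> (F m) w = F (Suc m) w"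
    and "w \<in> A"
  shows "(comp_op \<phi> ^^ n) (F 0) w = F n w"
  using \<open>w \<in> A\<close>
proof (induction n arbitrary: w)
  case (Suc n)
  then show ?case
    using invariant[OF Suc.prems] step[OF Suc.prems, of n, symmetric] by (simp add: comp_op_def)
qed simp

lemma positive_shadowing_comp_affine_map_expanding:
  assumes "0 < a" and "a < 1" and "Re b = 0"
  shows "positive_shadowing H2 H2_dist (comp_op (affine_map a b))"
  unfolding positive_shadowing_def
proof (intro allI impI)
  fix \<epsilon> :: real assume "\<epsilon> > 0"
  define \<phi> where "\<phi> = affine_map a b"
  define \<psi> where "\<psi> = affine_map (1 / a) (- b / complex_of_real a)"
  define \<delta> where "\<delta> = \<epsilon> * (sqrt (1 / a) - 1)"
  have \<psi>: "1 / a > 1" "Re (- b / complex_of_real a) \<ge> 0"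
    using assms by (simp_all add: Re_divide_of_real)
  then have "\<delta> > 0"
    using \<open>\<epsilon> > 0\<close> by (simp add: \<delta>_def)
  have \<psi>_\<phi>: "\<psi> (\<phi> w) = w" for w
    unfolding \<phi>_def \<psi>_def using affine_map_inverse(2) assms(1) by simp
  have \<phi>_rhp: "\<phi> w \<in> rhp" if "w \<in> rhp" for w
    unfolding \<phi>_def using affine_map_in_rhp assms that by simp
  show "\<exists>\<delta>>0. \<forall>xs. (\<forall>n. xs n \<in> H2) \<and> (\<forall>n. H2_dist (comp_op (affine_map a b) (xs n)) (xs (Suc n)) \<le> \<delta>) \<longrightarrow>
          (\<exists>x\<in>H2. \<forall>n. H2_dist ((comp_op (affine_map a b) ^^ n) x) (xs n) \<le> \<epsilon>)"
  proof (intro exI[of _ \<delta>] conjI allI impI \<open>\<delta> > 0\<close>)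
    fix xs
    assume xs: "(\<forall>n. xs n \<in> H2) \<and> (\<forall>n. H2_dist (comp_op (affine_map a b) (xs n)) (xs (Suc n)) \<le> \<delta>)"
    define e where "e k w = xs (Suc k) w - comp_op \<phi> (xs k) w" for k w
    have e: "e k \<in> H2" "H2_norm (e k) \<le> \<delta>" for k
      using xs H2_diff(1) H2_comp_affine_map(1)[OF assms(1)] assms(3) H2_dist_commute
      by (auto simp: e_def[abs_def] \<phi>_def H2_dist_def)
    have series: "\<And>w. w \<in> rhp \<Longrightarrow> summable (\<lambda>k. (comp_op \<psi> ^^ Suc k) (e (m + k)) w)"
      "(\<lambda>w. \<Sum>k. (comp_op \<psi> ^^ Suc k) (e (m + k)) w) \<in> H2"
      "H2_norm (\<lambda>w. \<Sum>k. (comp_op \<psi> ^^ Suc k) (e (m + k)) w) \<le> \<epsilon>" for m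
      using H2_suminf_funpow_comp_affine_map[OF \<psi>, where e = "\<lambda>k. e (m + k)" and \<delta> = \<delta>] e
        assms(2) by (simp_all add: \<psi>_def \<delta>_def)
    define shadow where "shadow m w = xs m w + (\<Sum>k. (comp_op \<psi> ^^ Suc k) (e (m + k)) w)" for m w
    have shadow: "shadow m \<in> H2" "H2_dist (shadow m) (xs m) \<le> \<epsilon>" for m
      using H2_add(1)[OF _ series(2)] xs series(3)[of m] by (auto simp: shadow_def[abs_def] H2_dist_def)
    have step: "comp_op \<phi> (shadow m) w = shadow (Suc m) w" if "w \<in> rhp" for m w
      unfolding shadow_def
      by (rule comp_op_backward_sum_step[OF \<psi>_\<phi> series(1)[OF \<phi>_rhp[OF that]] e_def])
    have "(comp_op \<phi> ^^ n) (shadow 0) w = shadow n w" if "w \<in> rhp" for n w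
      by (rule funpow_comp_op_eqI[of rhp]) (use \<phi>_rhp step that in auto)
    then have "H2_dist ((comp_op \<phi> ^^ n) (shadow 0)) (xs n) = H2_dist (shadow n) (xs n)" for n
      unfolding H2_dist_def by (intro H2_norm_cong) simp
    then show "\<exists>x\<in>H2. \<forall>n. H2_dist ((comp_op (affine_map a b) ^^ n) x) (xs n) \<le> \<epsilon>"
      using shadow unfolding \<phi>_def by metis
  qed
qed

section \<open>Failure of shadowing\<close>

lemma not_positive_shadowingI:
  assumes "\<And>\<delta>. \<delta> > 0 \<Longrightarrow> \<exists>xs. (\<forall>n. xs n \<in> X) \<and> (\<forall>n. d (T (xs n)) (xs (Suc n)) \<le> \<delta>) \<and>
              (\<forall>x\<in>X. \<exists>n. d ((T ^^ n) x) (xs n) > 1)"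
  shows "\<not> positive_shadowing X d T"
proof
  assume "positive_shadowing X d T"
  then obtain \<delta> where "\<delta> > 0" and shadow: "\<And>xs. (\<forall>n. xs n \<in> X) \<and> (\<forall>n. d (T (xs n)) (xs (Suc n)) \<le> \<delta>)
      \<Longrightarrow> \<exists>x\<in>X. \<forall>n. d ((T ^^ n) x) (xs n) \<le> 1"
    unfolding positive_shadowing_def by (meson zero_less_one)
  with assms show False
    by (meson not_le)
qed

definition kernel_one :: "complex \<Rightarrow> complex" where
  "kernel_one w = 1 / (w + 1)"

lemma hardy_line_kernel_one:
  assumes "x > 0"
  shows "hardy_line kernel_one x = ennreal (pi / (x + 1))"
proof -
  define c where "c = x + 1"
  have "c > 0" using assms by (simp add: c_def)
  define F where "F y = ennreal (inverse (c\<^sup>2 + y\<^sup>2))" for y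
  have integrand: "ennreal ((cmod (kernel_one (Complex x y)))\<^sup>2) = F y" for y
  proof -
    have "Complex x y + 1 = Complex c y" by (simp add: c_def complex_eq_iff)
    then have "(cmod (kernel_one (Complex x y)))\<^sup>2 = inverse (c\<^sup>2 + y\<^sup>2)"
      by (simp add: kernel_one_def divide_inverse norm_inverse power_inverse cmod_power2)
    then show ?thesis by (simp add: F_def)
  qed
  have F_scaled: "F (c * t) = ennreal (inverse (c\<^sup>2)) * ennreal (inverse (1 + t\<^sup>2))" for t
    using \<open>c > 0\<close> by (simp add: F_def ennreal_mult[symmetric] power_mult_distrib field_simps)
  have Cauchy_density: "(\<integral>\<^sup>+ t. ennreal (inverse (1 + t\<^sup>2)) \<partial>lborel) = ennreal pi"
    using integrable_inverse_1_plus_square LBINT_inverse_1_plus_square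
    by (subst nn_integral_eq_integral)
      (auto simp: set_integrable_def interval_lebesgue_integral_def set_lebesgue_integral_def)
  have "F \<in> borel_measurable borel"
    unfolding F_def by measurable
  then have "(\<integral>\<^sup>+ y. F y \<partial>lborel) = ennreal c * (\<integral>\<^sup>+ t. F (0 + c * t) \<partial>lborel)"
    using nn_integral_real_affine[of F c 0] \<open>c > 0\<close> by simp
  also have "\<dots> = ennreal c * (ennreal (inverse (c\<^sup>2)) * ennreal pi)"
    by (simp only: add_0 F_scaled) (simp add: nn_integral_cmult Cauchy_density)
  also have "\<dots> = ennreal (pi / c)"
    using \<open>c > 0\<close> by (simp add: ennreal_mult[symmetric] power2_eq_square field_simps)
  finally show ?thesis
    unfolding hardy_line_def integrand c_def .
qed

lemma kernel_one_holomorphic: "kernel_one holomorphic_on rhp"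
proof -
  have "w + 1 \<noteq> 0" if "w \<in> rhp" for w
    using that by (auto simp: rhp_def complex_eq_iff)
  then show ?thesis
    unfolding kernel_one_def[abs_def] by (intro holomorphic_intros)
qed

lemma kernel_one_H2: "kernel_one \<in> H2"
  and H2_norm_kernel_one: "H2_norm kernel_one = 1"
proof -
  have "hardy_line kernel_one x \<le> ennreal (pi * 1\<^sup>2)" if "x > 0" for x
    using that by (simp add: hardy_line_kernel_one divide_le_eq ennreal_leI)
  from H2_normI[OF kernel_one_holomorphic _ this]
  have H2: "kernel_one \<in> H2" and le: "H2_norm kernel_one \<le> 1"
    by simp_all
  then show "kernel_one \<in> H2" by simp
  define N where "N = H2_norm kernel_one"
  have "1 \<le> N\<^sup>2 + e" if "e > 0" for e
  proof -
    define x where "x = e / (N\<^sup>2 + 1)"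
    have "x > 0" and "x * N\<^sup>2 \<le> e"
      using \<open>e > 0\<close> by (simp_all add: x_def add_pos_nonneg field_simps)
    moreover have "ennreal (pi / (x + 1)) \<le> ennreal (pi * N\<^sup>2)"
      using hardy_line_le_H2_norm[OF H2 \<open>x > 0\<close>] \<open>x > 0\<close> by (simp add: hardy_line_kernel_one N_def)
    then have "1 \<le> (x + 1) * N\<^sup>2"
      using \<open>x > 0\<close> by (simp add: ennreal_le_iff divide_le_eq mult.commute)
    ultimately show ?thesis
      by (simp add: algebra_simps)
  qed
  then have "1 \<le> N\<^sup>2"
    by (rule field_le_epsilon)
  then show "H2_norm kernel_one = 1"
    using le abs_le_square_iff[of 1 N] by (simp add: N_def)
qed

lemma Re_kernel_one: "Re (kernel_one w) = (Re w + 1) / (cmod (w + 1))\<^sup>2"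
  by (simp add: kernel_one_def Re_divide')

lemma Re_kernel_one_ge:
  assumes "0 < p" and "p \<le> Re z + 1" and "cmod (z + 1) \<le> Q"
  shows "p / Q\<^sup>2 \<le> Re (kernel_one z)"
proof -
  have "Re z + 1 \<le> cmod (z + 1)"
    using complex_Re_le_cmod[of "z + 1"] by simp
  then have "0 < cmod (z + 1)"
    using assms(1,2) by linarith
  then have "p / Q\<^sup>2 \<le> p / (cmod (z + 1))\<^sup>2"
    using assms by (intro divide_left_mono power_mono mult_pos_pos) auto
  also have "\<dots> \<le> (Re z + 1) / (cmod (z + 1))\<^sup>2"
    using assms(2) by (intro divide_right_mono) auto
  finally show ?thesis by (simp add: Re_kernel_one)
qed

lemma not_positive_shadowing_comp_imaginary_translation:
  assumes "Re b = 0"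
  shows "\<not> positive_shadowing H2 H2_dist (comp_op (affine_map 1 b))"
proof (rule not_positive_shadowingI)
  fix \<delta> :: real assume "\<delta> > 0"
  define T where "T = comp_op (affine_map 1 b)"
  have T_H2: "(T ^^ n) f \<in> H2" if "f \<in> H2" for f n
    using H2_funpow_comp_affine_map[OF _ _ that] assms by (simp add: T_def)
  have T_isometric: "H2_norm ((T ^^ n) f) = H2_norm f" if "f \<in> H2" for f n
    unfolding T_def by (rule H2_norm_funpow_comp_imaginary_translation[OF assms that])
  define xs where "xs n = (\<lambda>w. complex_of_real (real n * \<delta>) * (T ^^ n) kernel_one w)" for n
  have "xs n \<in> H2" for n
    unfolding xs_def by (intro H2_scaleC(1) T_H2 kernel_one_H2)
  moreover have "H2_dist (T (xs n)) (xs (Suc n)) \<le> \<delta>" for n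
  proof -
    have "(\<lambda>w. T (xs n) w - xs (Suc n) w) = (\<lambda>w. complex_of_real (- \<delta>) * (T ^^ Suc n) kernel_one w)"
      by (simp add: fun_eq_iff xs_def T_def comp_op_def funpow_comp_op_apply funpow_swap1 algebra_simps)
    then show ?thesis
      using H2_scaleC(2)[OF T_H2[OF kernel_one_H2], of "complex_of_real (- \<delta>)" "Suc n"] \<open>\<delta> > 0\<close>
        T_isometric[OF kernel_one_H2, of "Suc n"]
      by (simp add: H2_dist_def H2_norm_kernel_one del: funpow.simps)
  qed
  moreover have "\<exists>n. H2_dist ((T ^^ n) x) (xs n) > 1" if "x \<in> H2" for x
  proof -
    obtain n :: nat where n: "real n * \<delta> > H2_norm x + 1"
      using reals_Archimedean3[OF \<open>\<delta> > 0\<close>] by blast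
    define g where "g w = x w - complex_of_real (real n * \<delta>) * kernel_one w" for w
    have g: "g \<in> H2"
      unfolding g_def[abs_def] by (intro H2_diff(1) that H2_scaleC(1) kernel_one_H2)
    have "(\<lambda>w. complex_of_real (real n * \<delta>) * kernel_one w) = (\<lambda>w. x w - g w)"
      by (simp add: g_def)
    then have "real n * \<delta> \<le> H2_norm x + H2_norm g"
      using H2_scaleC(2)[OF kernel_one_H2, of "complex_of_real (real n * \<delta>)"] H2_diff(2)[OF that g]
        \<open>\<delta> > 0\<close> by (simp add: H2_norm_kernel_one norm_mult)
    moreover have "(\<lambda>w. (T ^^ n) x w - xs n w) = (T ^^ n) g"
      by (simp add: fun_eq_iff xs_def g_def T_def funpow_comp_op_apply)
    ultimately have "H2_dist ((T ^^ n) x) (xs n) > 1"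
      using n T_isometric[OF g] by (simp add: H2_dist_def)
    then show ?thesis ..
  qed
  ultimately show "\<exists>xs. (\<forall>n. xs n \<in> H2) \<and> (\<forall>n. H2_dist (comp_op (affine_map 1 b) (xs n)) (xs (Suc n)) \<le> \<delta>)
      \<and> (\<forall>x\<in>H2. \<exists>n. H2_dist ((comp_op (affine_map 1 b) ^^ n) x) (xs n) > 1)"
    unfolding T_def by blast
qed

lemma orbit_sums_pseudotrajectory:
  assumes "a > 0" and "Re b \<ge> 0" and "u \<in> H2"
  defines "T \<equiv> comp_op (affine_map a b)"
  shows "(\<lambda>w. c * (\<Sum>j<n. (T ^^ j) u w)) \<in> H2"
    and "H2_dist (T (\<lambda>w. c * (\<Sum>j<n. (T ^^ j) u w))) (\<lambda>w. c * (\<Sum>j<Suc n. (T ^^ j) u w))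
           = cmod c * H2_norm u"
proof -
  show "(\<lambda>w. c * (\<Sum>j<n. (T ^^ j) u w)) \<in> H2"
    unfolding T_def using H2_funpow_comp_affine_map[OF assms(1-3)]
    by (intro H2_scaleC(1) H2_sum(1)) auto
  have "(\<lambda>w. T (\<lambda>w. c * (\<Sum>j<n. (T ^^ j) u w)) w - c * (\<Sum>j<Suc n. (T ^^ j) u w)) = (\<lambda>w. (- c) * u w)"
    by (simp add: fun_eq_iff T_def comp_op_def funpow_comp_op_apply sum.lessThan_Suc_shift
        funpow_swap1 algebra_simps del: sum.lessThan_Suc)
  then show "H2_dist (T (\<lambda>w. c * (\<Sum>j<n. (T ^^ j) u w))) (\<lambda>w. c * (\<Sum>j<Suc n. (T ^^ j) u w))
      = cmod c * H2_norm u"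
    unfolding H2_dist_def using H2_scaleC(2)[OF assms(3), of "- c"] by simp
qed

lemma not_positive_shadowing_if_orbit_sums_unbounded:
  assumes "a > 0" and "Re b \<ge> 0" and "x0 > 0" and "y1 < y2" and "r > 0"
    and orbit: "\<And>n y. y1 \<le> y \<Longrightarrow> y \<le> y2 \<Longrightarrow> r \<le> Re ((affine_map a b ^^ n) (Complex x0 y))"
    and unbounded: "\<And>R. \<exists>n. \<forall>y. y1 \<le> y \<longrightarrow> y \<le> y2 \<longrightarrow>
                        R \<le> (\<Sum>j<n. Re (kernel_one ((affine_map a b ^^ j) (Complex x0 y))))"
  shows "\<not> positive_shadowing H2 H2_dist (comp_op (affine_map a b))"
proof (rule not_positive_shadowingI)
  fix \<delta> :: real assume "\<delta> > 0"
  define T where "T = comp_op (affine_map a b)"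
  define xs where "xs n = (\<lambda>w. complex_of_real \<delta> * (\<Sum>j<n. (T ^^ j) kernel_one w))" for n
  have xs_H2: "xs n \<in> H2" and xs_step: "H2_dist (T (xs n)) (xs (Suc n)) \<le> \<delta>" for n
    using orbit_sums_pseudotrajectory[OF assms(1,2) kernel_one_H2, of "complex_of_real \<delta>" n] \<open>\<delta> > 0\<close>
    by (simp_all add: xs_def T_def H2_norm_kernel_one)
  have "\<exists>n. H2_dist ((T ^^ n) x) (xs n) > 1" if x: "x \<in> H2" for x
  proof -
    define M where "M = 4 * H2_norm x / sqrt (r / 2)"
    define K where "K = 2 * sqrt (pi / (y2 - y1))"
    obtain n where n: "\<And>y. y1 \<le> y \<Longrightarrow> y \<le> y2 \<Longrightarrow>
        (M + K) / \<delta> \<le> (\<Sum>j<n. Re (kernel_one ((affine_map a b ^^ j) (Complex x0 y))))"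
      using unbounded by blast
    define g where "g w = (T ^^ n) x w - xs n w" for w
    have g: "g \<in> H2"
      unfolding g_def[abs_def] T_def using xs_H2 by (intro H2_diff(1) H2_funpow_comp_affine_map assms x)
    have "K \<le> cmod (g (Complex x0 y))" if "y1 \<le> y" "y \<le> y2" for y
    proof -
      let ?w = "Complex x0 y"
      have "cmod ((T ^^ n) x ?w) \<le> M"
        unfolding M_def T_def funpow_comp_op_apply
        using orbit[OF that, of n] \<open>r > 0\<close> by (intro norm_le_H2_norm[OF x]) auto
      moreover have "M + K \<le> \<delta> * (\<Sum>j<n. Re (kernel_one ((affine_map a b ^^ j) ?w)))"
        using n[OF that] \<open>\<delta> > 0\<close> by (simp add: pos_divide_le_eq mult.commute)
      moreover have "\<dots> = Re (xs n ?w)"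
        by (simp add: xs_def T_def funpow_comp_op_apply Re_sum)
      moreover have "Re (xs n ?w) - cmod ((T ^^ n) x ?w) \<le> cmod (g ?w)"
        unfolding g_def using complex_Re_le_cmod[of "xs n ?w"]
        by (metis norm_minus_commute norm_triangle_ineq2 order_trans diff_right_mono)
      ultimately show ?thesis by linarith
    qed
    then have "(y2 - y1) * K\<^sup>2 \<le> pi * (H2_norm g)\<^sup>2"
      using \<open>y1 < y2\<close> by (intro H2_norm_ge_segment[OF g \<open>x0 > 0\<close>]) (auto simp: K_def)
    moreover have "(y2 - y1) * K\<^sup>2 = pi * 2\<^sup>2"
      using \<open>y1 < y2\<close> by (simp add: K_def power_mult_distrib)
    ultimately have "2 \<le> H2_norm g"
      by (metis H2_norm_nonneg mult_le_cancel_left_pos pi_gt_zero power2_le_imp_le)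
    then show ?thesis
      by (intro exI[of _ n]) (simp add: H2_dist_def g_def[abs_def])
  qed
  with xs_H2 xs_step
  show "\<exists>xs. (\<forall>n. xs n \<in> H2) \<and> (\<forall>n. H2_dist (comp_op (affine_map a b) (xs n)) (xs (Suc n)) \<le> \<delta>)
      \<and> (\<forall>x\<in>H2. \<exists>n. H2_dist ((comp_op (affine_map a b) ^^ n) x) (xs n) > 1)"
    unfolding T_def by blast
qed

lemma Re_kernel_one_translate_ge:
  assumes "Re b > 0" and "0 \<le> y" and "y \<le> 1"
  shows "min 2 (Re b) / (3 + cmod b)\<^sup>2 / (1 + real j) \<le> Re (kernel_one (Complex 1 y + of_nat j * b))"
proof -
  let ?z = "Complex 1 y + of_nat j * b"
  have "3 + cmod b > 0"
    using norm_ge_zero[of b] by linarith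
  have "min 2 (Re b) * (1 + real j) = min 2 (Re b) + real j * min 2 (Re b)"
    by (simp add: algebra_simps)
  also have "\<dots> \<le> 2 + real j * Re b"
    by (intro add_mono mult_left_mono) auto
  finally have "min 2 (Re b) * (1 + real j) \<le> Re ?z + 1"
    by simp
  moreover have "cmod (?z + 1) \<le> (3 + cmod b) * (1 + real j)"
  proof -
    have "cmod (Complex 2 y) \<le> 3"
      using cmod_le[of "Complex 2 y"] assms(2,3) by simp
    moreover have "?z + 1 = Complex 2 y + of_nat j * b"
      by (simp add: complex_eq_iff)
    ultimately have "cmod (?z + 1) \<le> 3 + real j * cmod b"
      by (metis add_mono norm_mult norm_of_nat norm_triangle_le order_refl)
    moreover have "3 + real j * cmod b \<le> (3 + cmod b) * (1 + real j)"
      by (simp add: algebra_simps)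
    ultimately show ?thesis by linarith
  qed
  ultimately have "min 2 (Re b) * (1 + real j) / ((3 + cmod b) * (1 + real j))\<^sup>2 \<le> Re (kernel_one ?z)"
    using assms(1) by (intro Re_kernel_one_ge) auto
  moreover have "min 2 (Re b) * (1 + real j) / ((3 + cmod b) * (1 + real j))\<^sup>2
      = min 2 (Re b) / (3 + cmod b)\<^sup>2 / (1 + real j)"
    using \<open>3 + cmod b > 0\<close> by (simp add: power2_eq_square)
  ultimately show ?thesis by simp
qed

lemma not_positive_shadowing_comp_translation:
  assumes "Re b > 0"
  shows "\<not> positive_shadowing H2 H2_dist (comp_op (affine_map 1 b))"
proof (rule not_positive_shadowing_if_orbit_sums_unbounded[of 1 b 1 0 1 1])
  show "1 \<le> Re ((affine_map 1 b ^^ n) (Complex 1 y))" for n y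
    using assms by (simp add: funpow_affine_map_one)
  define m where "m = min 2 (Re b) / (3 + cmod b)\<^sup>2"
  show "\<exists>n. \<forall>y. 0 \<le> y \<longrightarrow> y \<le> 1 \<longrightarrow> R \<le> (\<Sum>j<n. Re (kernel_one ((affine_map 1 b ^^ j) (Complex 1 y))))"
    for R
  proof -
    have "3 + cmod b > 0"
      using norm_ge_zero[of b] by linarith
    then have "m > 0"
      using assms by (simp add: m_def)
    have "\<forall>\<^sub>F n in sequentially. R / m \<le> harm n"
      using harm_at_top by (simp add: filterlim_at_top)
    then obtain n where "R / m \<le> harm n"
      by (auto simp: eventually_sequentially)
    then have "R \<le> m * harm n"
      using \<open>m > 0\<close> by (simp add: pos_divide_le_eq mult.commute)
    also have "\<dots> = (\<Sum>j<n. m / (1 + real j))"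
      by (simp add: harm_altdef sum_distrib_left divide_inverse add.commute)
    finally show ?thesis
      using Re_kernel_one_translate_ge[OF assms] unfolding m_def funpow_affine_map_one
      by (meson order_trans sum_mono)
  qed
qed (use assms in simp_all)

lemma not_positive_shadowing_comp_affine_map_attracting:
  assumes "0 < a" and "a < 1" and "Re b > 0"
  shows "\<not> positive_shadowing H2 H2_dist (comp_op (affine_map a b))"
proof -
  define ws where "ws = b / complex_of_real (1 - a)" \<comment> \<open>the attracting fixed point\<close>
  define \<rho> where "\<rho> = Re ws / 2"
  define D where "D = cball ws \<rho>"
  have "\<rho> > 0"
    using assms by (simp add: \<rho>_def ws_def Re_divide_of_real)
  have "affine_map a b w \<in> D" if "w \<in> D" for w
  proof -
    have "affine_map a b w - ws = complex_of_real a * (w - ws)"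
      using assms(2) by (simp add: affine_map_def ws_def field_simps)
    then have "cmod (affine_map a b w - ws) = a * cmod (w - ws)"
      using assms(1) by (simp add: norm_mult)
    also have "\<dots> \<le> cmod (w - ws)"
      using assms(1,2) by (simp add: mult_left_le_one_le)
    finally show ?thesis
      using that by (simp add: D_def dist_norm norm_minus_commute)
  qed
  then have orbit_D: "(affine_map a b ^^ n) w \<in> D" if "w \<in> D" for n w
    using that by (induction n) auto
  have Re_D: "\<rho> \<le> Re w" if "w \<in> D" for w
    using that abs_Re_le_cmod[of "ws - w"] by (simp add: D_def dist_norm \<rho>_def)
  have segment_D: "Complex (Re ws) y \<in> D" if "Im ws - \<rho> \<le> y" "y \<le> Im ws + \<rho>" for y
    using that by (simp add: D_def dist_norm cmod_def abs_le_iff)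
  define m where "m = 1 / (cmod ws + \<rho> + 1)\<^sup>2"
  have kernel_D: "m \<le> Re (kernel_one w)" if "w \<in> D" for w
  proof -
    have "cmod (w + 1) \<le> cmod ws + \<rho> + 1"
      using that norm_triangle_ineq[of "ws" "w - ws"] norm_triangle_ineq[of w 1]
      by (simp add: D_def dist_norm norm_minus_commute)
    then show ?thesis
      unfolding m_def using Re_D[OF that] \<open>\<rho> > 0\<close> by (intro Re_kernel_one_ge) auto
  qed
  show ?thesis
  proof (rule not_positive_shadowing_if_orbit_sums_unbounded[of a b "Re ws" "Im ws - \<rho>" "Im ws + \<rho>" \<rho>])
    show "\<rho> \<le> Re ((affine_map a b ^^ n) (Complex (Re ws) y))"
      if "Im ws - \<rho> \<le> y" "y \<le> Im ws + \<rho>" for n y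
      using Re_D orbit_D segment_D that by blast
    show "\<exists>n. \<forall>y. Im ws - \<rho> \<le> y \<longrightarrow> y \<le> Im ws + \<rho> \<longrightarrow>
        R \<le> (\<Sum>j<n. Re (kernel_one ((affine_map a b ^^ j) (Complex (Re ws) y))))" for R
    proof -
      have "cmod ws + \<rho> + 1 > 0"
        using \<open>\<rho> > 0\<close> norm_ge_zero[of ws] by linarith
      then have "m > 0" by (simp add: m_def)
      obtain n :: nat where "R / m \<le> real n"
        using real_arch_simple by blast
      then have "R \<le> (\<Sum>j<n. m)"
        using \<open>m > 0\<close> by (simp add: pos_divide_le_eq)
      then show ?thesis
        using kernel_D orbit_D segment_D by (meson order_trans sum_mono)
    qed
  qed (use assms \<open>\<rho> > 0\<close> in \<open>simp_all add: \<rho>_def\<close>)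
qed

theorem theorem4p2:
  fixes a :: real and b :: complex
  assumes "a > 0" and "Re b \<ge> 0"
  defines "\<phi> \<equiv> (\<lambda>w. complex_of_real a * w + b)"
  shows "(((a \<noteq> 1 \<and> Re b = 0) \<or> (a > 1 \<and> Re b > 0)) \<longrightarrow>
            positive_shadowing H2 H2_dist (comp_op \<phi>))
       \<and> ((a = 1 \<or> (a < 1 \<and> Re b > 0)) \<longrightarrow>
            \<not> positive_shadowing H2 H2_dist (comp_op \<phi>))"
proof -
  have "\<phi> = affine_map a b"
    unfolding \<phi>_def affine_map_def[abs_def] ..
  moreover have "positive_shadowing H2 H2_dist (comp_op (affine_map a b))"
    if "(a \<noteq> 1 \<and> Re b = 0) \<or> (a > 1 \<and> Re b > 0)"
  proof (cases "a > 1")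
    case True
    then show ?thesis using positive_shadowing_comp_affine_map_contracting assms(2) by blast
  next
    case False
    then show ?thesis using positive_shadowing_comp_affine_map_expanding assms(1) that by force
  qed
  moreover have "\<not> positive_shadowing H2 H2_dist (comp_op (affine_map a b))"
    if negative_case: "a = 1 \<or> (a < 1 \<and> Re b > 0)"
  proof -
    consider "a = 1" "Re b = 0" | "a = 1" "Re b > 0" | "a < 1" "Re b > 0"
      using negative_case assms(2) by linarith
    then show ?thesis
      using not_positive_shadowing_comp_imaginary_translation not_positive_shadowing_comp_translation
        not_positive_shadowing_comp_affine_map_attracting assms(1) by cases auto
  qed
  ultimately show ?thesis by blast
qed

end
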